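(* Let $(\nu_j)_{j\in\mathbb Z}$ be a bounded real sequence, $(H\psi)_n=\psi_{n+1}+\psi_{n-1}+\nu_n\psi_n$ on $\ell^2(\mathbb Z)$, $(A\psi)_n=i(\psi_{n+1}-\psi_{n-1})$, and suppose that for some real sequence $T_k\to+\infty$, $\frac1{T_k}\int_0^{T_k}e^{iHt}Ae^{-iHt}dt\to Q$ strongly. Then for every $\varepsilon>0$ there exist $K(\varepsilon)\in\mathbb N$, $L(\varepsilon)\ge0$ and $C(\varepsilon)>0$ such that for every $k\ge K(\varepsilon)$ there are $l,r\in\mathbb Z$ with $|l|\le L(\varepsilon)$ and $(\|Q\|-\varepsilon)T_k\le|r|\le(\|Q\|+\varepsilon)T_k$ satisfying $$|\langle\delta_r,e^{-iT_kH}\delta_l\rangle|^2\ge\frac{C(\varepsilon)}{T_k}.$$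
   Context: $\delta_j$ denotes the standard basis vector of $\ell^2(\mathbb Z)$ supported at $j$. *)

theory Defs
  imports "HOL-Analysis.Analysis"
begin

definition ell2 :: "(int \<Rightarrow> complex) set" where
  "ell2 = {\<psi>. (\<lambda>n. (cmod (\<psi> n))\<^sup>2) summable_on UNIV}"

definition l2norm :: "(int \<Rightarrow> complex) \<Rightarrow> real" where
  "l2norm \<psi> = sqrt (infsum (\<lambda>n. (cmod (\<psi> n))\<^sup>2) UNIV)"

definition l2inner :: "(int \<Rightarrow> complex) \<Rightarrow> (int \<Rightarrow> complex) \<Rightarrow> complex" where
  "l2inner \<phi> \<psi> = infsum (\<lambda>n. cnj (\<phi> n) * \<psi> n) UNIV"

definition delta :: "int \<Rightarrow> int \<Rightarrow> complex" where
  "delta j = (\<lambda>n. if n = j then 1 else 0)"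

definition opnorm :: "((int \<Rightarrow> complex) \<Rightarrow> (int \<Rightarrow> complex)) \<Rightarrow> real" where
  "opnorm Q = Sup {l2norm (Q \<psi>) | \<psi>. \<psi> \<in> ell2 \<and> l2norm \<psi> \<le> 1}"

definition schrH :: "(int \<Rightarrow> real) \<Rightarrow> (int \<Rightarrow> complex) \<Rightarrow> (int \<Rightarrow> complex)" where
  "schrH \<nu> \<psi> = (\<lambda>n. \<psi> (n + 1) + \<psi> (n - 1) + complex_of_real (\<nu> n) * \<psi> n)"

definition opA :: "(int \<Rightarrow> complex) \<Rightarrow> (int \<Rightarrow> complex)" where
  "opA \<psi> = (\<lambda>n. \<i> * (\<psi> (n + 1) - \<psi> (n - 1)))"

text \<open>e^{-itH} for bounded H, via its (norm-convergent) exponential series, evaluated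
  componentwise.\<close>
definition evol :: "(int \<Rightarrow> real) \<Rightarrow> real \<Rightarrow> (int \<Rightarrow> complex) \<Rightarrow> (int \<Rightarrow> complex)" where
  "evol \<nu> t \<psi> = (\<lambda>n. (\<Sum>k. (- \<i> * complex_of_real t) ^ k / of_nat (fact k) * ((schrH \<nu> ^^ k) \<psi>) n))"

definition heis :: "(int \<Rightarrow> real) \<Rightarrow> real \<Rightarrow> (int \<Rightarrow> complex) \<Rightarrow> (int \<Rightarrow> complex)" where
  "heis \<nu> t \<psi> = evol \<nu> (- t) (opA (evol \<nu> t \<psi>))"

definition tavg :: "(int \<Rightarrow> real) \<Rightarrow> real \<Rightarrow> (int \<Rightarrow> complex) \<Rightarrow> (int \<Rightarrow> complex)" where
  "tavg \<nu> T \<psi> = (\<lambda>n. complex_of_real (1 / T) * integral {0..T} (\<lambda>t. heis \<nu> t \<psi> n))"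

end

theory Submission
  imports Defs
begin

text \<open>Let U(t) = e^(-itH) and let X be the position operator. Duhamel's formula gives
  X U(t) = U(t) (X + t A(t)), where A(t) is the average of the Heisenberg current e^(isH) A e^(-isH)
  over [0, t]. Since these averages converge strongly to the bounded symmetric operator Q, a finitely
  supported approximate eigenvector v of Q for an eigenvalue a = \<plusminus>\<parallel>Q\<parallel> satisfies
  (X/t - a) U(t) v \<approx> 0 for large t. So U(t) v keeps a fixed fraction of its mass on the O(t)
  sites r with |r/t - a| < \<epsilon>, and as U(t) v is a combination of the columns U(t) \<delta>_l with |l| \<le> N,
  one of the O(t) entries <\<delta>_r, U(t) \<delta>_l> has squared modulus of order 1/t.\<close>

lemma cmod_mult_le_sum_squares: "cmod a * cmod b \<le> (cmod a)\<^sup>2 + (cmod b)\<^sup>2"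
  using sum_squares_bound[of "cmod a" "cmod b"] mult_nonneg_nonneg[OF norm_ge_zero norm_ge_zero, of a b]
  by linarith

lemma cmod_add_square_le: "(cmod (a + b))\<^sup>2 \<le> 2 * (cmod a)\<^sup>2 + 2 * (cmod b)\<^sup>2"
proof -
  have "(cmod (a + b))\<^sup>2 \<le> (cmod a + cmod b)\<^sup>2"
    by (simp add: power_mono norm_triangle_ineq)
  also have "\<dots> \<le> 2 * (cmod a)\<^sup>2 + 2 * (cmod b)\<^sup>2"
    using sum_squares_bound[of "cmod a" "cmod b"] unfolding power2_sum by linarith
  finally show ?thesis .
qed

lemma power2_norm_diff:
  fixes a b :: "'a::real_inner"
  shows "(norm (a - b))\<^sup>2 = (norm a)\<^sup>2 - 2 * inner a b + (norm b)\<^sup>2"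
  by (simp add: power2_norm_eq_inner inner_diff_left inner_diff_right inner_commute)

lemma symmetric_square_defect_le:
  fixes q :: "'a::real_inner \<Rightarrow> 'a"
  assumes sym: "\<And>x y. inner (q x) y = inner x (q y)"
    and bound: "\<And>x. norm (q x) \<le> m * norm x" and "m \<ge> 0" and "norm x \<le> 1"
  shows "(norm (q (q x) - m\<^sup>2 *\<^sub>R x))\<^sup>2 \<le> m ^ 4 - m\<^sup>2 * (norm (q x))\<^sup>2"
proof -
  have "(norm (q (q x)))\<^sup>2 \<le> m\<^sup>2 * (norm (q x))\<^sup>2"
    using bound[of "q x"] by (metis norm_ge_zero power_mono power_mult_distrib)
  moreover have "(norm (m\<^sup>2 *\<^sub>R x))\<^sup>2 \<le> m ^ 4"
    using mult_left_mono[of "(norm x)\<^sup>2" 1 "m ^ 4"] assms(3,4)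
    by (simp add: power_le_one power_mult_distrib flip: power_mult)
  moreover have "inner (q (q x)) (m\<^sup>2 *\<^sub>R x) = m\<^sup>2 * (norm (q x))\<^sup>2"
    by (simp add: sym power2_norm_eq_inner)
  ultimately show ?thesis
    unfolding power2_norm_diff by linarith
qed

text \<open>A Weyl-sequence argument: if x almost attains the norm m of a symmetric operator q, then
  q(qx) is close to m^2 x, and one of qx + mx, qx - mx is a non-small approximate eigenvector.\<close>

lemma symmetric_approx_eigenvector:
  fixes q :: "'a::real_inner \<Rightarrow> 'a"
  assumes lin: "linear q"
    and sym: "\<And>x y. inner (q x) y = inner x (q y)"
    and bound: "\<And>x. norm (q x) \<le> m * norm x"
    and almost_attained: "\<And>\<delta>. \<delta> > 0 \<Longrightarrow> \<exists>x. norm x \<le> 1 \<and> norm (q x) > m - \<delta>"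
    and "m > 0" "\<eta> > 0"
  shows "\<exists>u a. norm u = 1 \<and> \<bar>a\<bar> = m \<and> norm (q u - a *\<^sub>R u) \<le> \<eta>"
proof -
  define \<delta> where "\<delta> = min (m/2) (\<eta>\<^sup>2 / (8 * m))"
  have \<delta>: "\<delta> > 0" "\<delta> \<le> m/2" "\<delta> \<le> \<eta>\<^sup>2 / (8 * m)" unfolding \<delta>_def using assms by auto
  obtain x where x: "norm x \<le> 1" "norm (q x) > m - \<delta>" using almost_attained[OF \<delta>(1)] by blast
  define w where "w = q (q x) - m\<^sup>2 *\<^sub>R x"
  have "(norm w)\<^sup>2 \<le> m ^ 4 - m\<^sup>2 * (norm (q x))\<^sup>2"
    unfolding w_def using symmetric_square_defect_le[OF sym bound] x(1) assms(5) by simp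
  also have "\<dots> \<le> m ^ 4 - m\<^sup>2 * (m - \<delta>)\<^sup>2"
    using x(2) \<delta> by (intro diff_left_mono mult_left_mono power_mono) auto
  also have "\<dots> \<le> m\<^sup>2 * (2 * m * \<delta>)"
    using zero_le_square[of "\<delta> * m"] by (simp add: power2_eq_square power4_eq_xxxx algebra_simps)
  also have "\<dots> \<le> m\<^sup>2 * (2 * m * (\<eta>\<^sup>2 / (8 * m)))"
    using \<delta> assms(5) by (intro mult_left_mono) auto
  also have "\<dots> = (\<eta> * (m/2))\<^sup>2" using assms(5) by (simp add: power2_eq_square field_simps)
  finally have w: "norm w \<le> \<eta> * (m/2)" by (rule power2_le_imp_le) (use assms in simp)
  have eigen: "q (q x + m *\<^sub>R x) - m *\<^sub>R (q x + m *\<^sub>R x) = w"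
    "q (q x - m *\<^sub>R x) - (- m) *\<^sub>R (q x - m *\<^sub>R x) = w"
    unfolding w_def using lin by (simp_all add: linear_add linear_diff linear_scale algebra_simps power2_eq_square)
  have big: "m \<le> norm (q x + m *\<^sub>R x) + norm (q x - m *\<^sub>R x)"
  proof -
    have "norm (q x) \<le> m * norm x" by (rule bound)
    moreover have "norm ((q x + m *\<^sub>R x) - (q x - m *\<^sub>R x)) = 2 * (m * norm x)"
      using assms(5) by (simp flip: scaleR_2)
    ultimately show ?thesis using x(2) \<delta>(2) norm_triangle_ineq4[of "q x + m *\<^sub>R x" "q x - m *\<^sub>R x"] by linarith
  qed
  obtain z a where z: "norm z \<ge> m/2" "\<bar>a\<bar> = m" "q z - a *\<^sub>R z = w"
  proof (cases "norm (q x + m *\<^sub>R x) \<ge> m/2")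
    case True thus ?thesis using that[of "q x + m *\<^sub>R x" m] eigen assms(5) by simp
  next
    case False thus ?thesis using that[of "q x - m *\<^sub>R x" "- m"] eigen assms(5) big by simp
  qed
  have z0: "norm z > 0" using z(1) assms(5) by linarith
  have "q ((1 / norm z) *\<^sub>R z) - a *\<^sub>R ((1 / norm z) *\<^sub>R z) = (1 / norm z) *\<^sub>R w"
    unfolding z(3)[symmetric] using lin by (simp add: linear_scale algebra_simps)
  hence "norm (q ((1 / norm z) *\<^sub>R z) - a *\<^sub>R ((1 / norm z) *\<^sub>R z)) = norm w / norm z" by simp
  also have "\<dots> \<le> (\<eta> * (m/2)) / (m/2)"
    using w z(1) z0 assms by (intro frac_le) auto
  also have "\<dots> = \<eta>" using assms(5) by simp
  finally show ?thesis using z0 z(2) by (intro exI[of _ "(1 / norm z) *\<^sub>R z"] exI[of _ a]) simp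
qed

lemma card_int_between_le:
  fixes lo hi :: real
  shows "finite {r::int. lo < r \<and> r < hi}"
    and "real (card {r::int. lo < r \<and> r < hi}) \<le> max 0 (hi - lo + 1)"
proof -
  have sub: "{r::int. lo < r \<and> r < hi} \<subseteq> {\<lceil>lo\<rceil>..\<lfloor>hi\<rfloor>}"
    by (auto simp: ceiling_le_iff le_floor_iff)
  thus "finite {r::int. lo < r \<and> r < hi}" by (rule finite_subset) simp
  hence "card {r::int. lo < r \<and> r < hi} \<le> nat (\<lfloor>hi\<rfloor> - \<lceil>lo\<rceil> + 1)"
    using card_mono[OF _ sub] by simp
  moreover have "real (nat (\<lfloor>hi\<rfloor> - \<lceil>lo\<rceil> + 1)) \<le> max 0 (hi - lo + 1)"
    using le_of_int_ceiling[of lo] of_int_floor_le[of hi] by linarith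
  ultimately show "real (card {r::int. lo < r \<and> r < hi}) \<le> max 0 (hi - lo + 1)"
    by linarith
qed

lemma exists_ge_average:
  fixes f :: "'a \<Rightarrow> real"
  assumes "finite S" "c > 0" "c \<le> sum f S"
  shows "\<exists>p\<in>S. c / real (card S) \<le> f p"
proof (rule ccontr)
  have "S \<noteq> {}" using assms by auto
  hence card: "card S > 0" using assms(1) by (simp add: card_gt_0_iff)
  assume "\<not> ?thesis"
  hence "sum f S < real (card S) * (c / real (card S))"
    using card by (intro sum_bounded_above_strict) (auto simp: not_le)
  thus False using assms card by (simp add: \<open>S \<noteq> {}\<close>)
qed

instance prod :: (perfect_space, perfect_space) perfect_space
proof
  fix x :: "'a \<times> 'b"
  show "\<not> open {x}"
  proof
    assume "open {x}"
    then obtain A B where "open A" "open B" "x \<in> A \<times> B" "A \<times> B \<subseteq> {x}"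
      using open_prod_elim[of "{x}" x] by blast
    hence "A = {fst x}" by (auto simp: mem_Times_iff) (metis SigmaI fst_conv singletonD subsetD)
    thus False using \<open>open A\<close> not_open_singleton by auto
  qed
qed

section \<open>The sequence space\<close>

lemma ell2_zero: "(\<lambda>n. 0) \<in> ell2"
  unfolding ell2_def by simp

lemma ell2_add: "\<psi> \<in> ell2 \<Longrightarrow> \<phi> \<in> ell2 \<Longrightarrow> (\<lambda>n. \<psi> n + \<phi> n) \<in> ell2"
  unfolding ell2_def
  apply clarsimp
  apply (rule summable_on_comparison_test[where f="\<lambda>n. 2 * (cmod (\<psi> n))\<^sup>2 + 2 * (cmod (\<phi> n))\<^sup>2"])
  by (auto intro!: summable_on_add summable_on_cmult_right cmod_add_square_le)

lemma ell2_scale: "\<psi> \<in> ell2 \<Longrightarrow> (\<lambda>n. c * \<psi> n) \<in> ell2"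
  unfolding ell2_def by (auto simp: norm_mult power_mult_distrib intro!: summable_on_cmult_right)

lemma ell2_uminus: "\<psi> \<in> ell2 \<Longrightarrow> (\<lambda>n. - \<psi> n) \<in> ell2"
  unfolding ell2_def by simp

lemma ell2_diff: "\<psi> \<in> ell2 \<Longrightarrow> \<phi> \<in> ell2 \<Longrightarrow> (\<lambda>n. \<psi> n - \<phi> n) \<in> ell2"
  using ell2_add[of \<psi> "\<lambda>n. - \<phi> n"] ell2_uminus[of \<phi>] by simp

lemma ell2_finite_support: "finite {n. \<psi> n \<noteq> 0} \<Longrightarrow> \<psi> \<in> ell2"
  unfolding ell2_def by (auto intro!: finite_nonzero_values_imp_summable_on elim!: finite_subset[rotated])

lemma delta_ell2: "delta j \<in> ell2"
  by (rule ell2_finite_support) (simp add: delta_def)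

lemma ell2_cnj_mult_summable: "\<psi> \<in> ell2 \<Longrightarrow> \<phi> \<in> ell2 \<Longrightarrow> (\<lambda>n. cnj (\<psi> n) * \<phi> n) summable_on UNIV"
  unfolding ell2_def
  apply (rule abs_summable_summable)
  apply clarsimp
  apply (rule summable_on_comparison_test[where f="\<lambda>n. (cmod (\<psi> n))\<^sup>2 + (cmod (\<phi> n))\<^sup>2"])
  by (auto intro!: summable_on_add simp: norm_mult cmod_mult_le_sum_squares)

lemma ell2_bounded_partial_sums:
  assumes "\<And>F. finite F \<Longrightarrow> (\<Sum>n\<in>F. (cmod (\<psi> n))\<^sup>2) \<le> B"
  shows "\<psi> \<in> ell2" "infsum (\<lambda>n. (cmod (\<psi> n))\<^sup>2) UNIV \<le> B"
proof -
  have s: "(\<lambda>n. (cmod (\<psi> n))\<^sup>2) summable_on UNIV"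
    apply (rule nonneg_bdd_above_summable_on)
    using assms by (auto intro!: bdd_aboveI)
  thus "\<psi> \<in> ell2" unfolding ell2_def by simp
  show "infsum (\<lambda>n. (cmod (\<psi> n))\<^sup>2) UNIV \<le> B"
    by (rule infsum_le_finite_sums[OF s]) (use assms in auto)
qed

lemma l2inner_delta_left: "l2inner (delta r) \<phi> = \<phi> r"
proof -
  have "l2inner (delta r) \<phi> = infsum (\<lambda>n. \<phi> n) {r}"
    unfolding l2inner_def by (rule infsum_cong_neutral) (auto simp: delta_def)
  thus ?thesis by simp
qed

typedef l2 = ell2 morphisms seq l2_of
  using ell2_zero by blast

setup_lifting type_definition_l2

lemma seq_in_ell2 [simp]: "seq x \<in> ell2"
  using seq by blast

lemma l2_eqI: "(\<And>n. seq x n = seq y n) \<Longrightarrow> x = y"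
  by (simp add: seq_inject[symmetric] fun_eq_iff)

lemma seq_square_summable: "(\<lambda>n. (cmod (seq x n))\<^sup>2) summable_on UNIV"
  using seq_in_ell2 unfolding ell2_def by blast

definition cinner :: "l2 \<Rightarrow> l2 \<Rightarrow> complex" where
  "cinner x y = infsum (\<lambda>n. cnj (seq x n) * seq y n) UNIV"

lemma cinner_self: "cinner x x = of_real (infsum (\<lambda>n. (cmod (seq x n))\<^sup>2) UNIV)"
proof -
  have "(\<lambda>n. cnj (seq x n) * seq x n) = (\<lambda>n. of_real ((cmod (seq x n))\<^sup>2))"
    by (metis complex_norm_square mult.commute)
  thus ?thesis unfolding cinner_def
    by (metis has_sum_infsum has_sum_of_real infsumI seq_square_summable)
qed

lemma cinner_commute_cnj: "cnj (cinner x y) = cinner y x"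
  unfolding cinner_def by (subst infsum_cnj[symmetric]) (simp add: mult.commute)

text \<open>l2 is treated as a real Hilbert space with inner product Re <x, y>; complex scalars act
  through cscale below.\<close>

instantiation l2 :: real_inner
begin
lift_definition zero_l2 :: l2 is "\<lambda>n. 0" by (rule ell2_zero)
lift_definition plus_l2 :: "l2 \<Rightarrow> l2 \<Rightarrow> l2" is "\<lambda>\<psi> \<phi> n. \<psi> n + \<phi> n" by (rule ell2_add)
lift_definition uminus_l2 :: "l2 \<Rightarrow> l2" is "\<lambda>\<psi> n. - \<psi> n" by (rule ell2_uminus)
lift_definition minus_l2 :: "l2 \<Rightarrow> l2 \<Rightarrow> l2" is "\<lambda>\<psi> \<phi> n. \<psi> n - \<phi> n" by (rule ell2_diff)
lift_definition scaleR_l2 :: "real \<Rightarrow> l2 \<Rightarrow> l2" is "\<lambda>r \<psi> n. complex_of_real r * \<psi> n" by (rule ell2_scale)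
definition inner_l2 :: "l2 \<Rightarrow> l2 \<Rightarrow> real" where "inner_l2 x y = Re (cinner x y)"
definition norm_l2 :: "l2 \<Rightarrow> real" where "norm_l2 x = sqrt (inner x x)"
definition sgn_l2 :: "l2 \<Rightarrow> l2" where "sgn_l2 x = scaleR (inverse (norm x)) x"
definition dist_l2 :: "l2 \<Rightarrow> l2 \<Rightarrow> real" where "dist_l2 x y = norm (x - y)"
definition uniformity_l2 :: "(l2 \<times> l2) filter" where
  "uniformity_l2 = (INF e\<in>{0<..}. principal {(x, y). dist x y < e})"
definition open_l2 :: "l2 set \<Rightarrow> bool" where
  "open_l2 U = (\<forall>x\<in>U. \<forall>\<^sub>F (x', y) in uniformity. x' = x \<longrightarrow> y \<in> U)"

instance
proof
  fix x y z :: l2 and a b :: real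
  show "x + y + z = x + (y + z)" by transfer (simp add: add.assoc)
  show "x + y = y + x" by transfer (simp add: add.commute)
  show "0 + x = x" by transfer simp
  show "- x + x = 0" by transfer simp
  show "x - y = x + - y" by transfer simp
  show "a *\<^sub>R (x + y) = a *\<^sub>R x + a *\<^sub>R y" by transfer (simp add: distrib_left)
  show "(a + b) *\<^sub>R x = a *\<^sub>R x + b *\<^sub>R x" by transfer (simp add: distrib_right)
  show "a *\<^sub>R b *\<^sub>R x = (a * b) *\<^sub>R x" by transfer (simp add: mult.assoc)
  show "1 *\<^sub>R x = x" by transfer simp
  show "dist x y = norm (x - y)" by (simp add: dist_l2_def)
  show "sgn x = inverse (norm x) *\<^sub>R x" by (simp add: sgn_l2_def)
  show "(uniformity :: (l2 \<times> l2) filter) = (INF e\<in>{0<..}. principal {(x, y). dist x y < e})"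
    by (simp add: uniformity_l2_def)
  show "open U = (\<forall>x\<in>U. \<forall>\<^sub>F (x', y) in uniformity. x' = x \<longrightarrow> y \<in> U)" for U :: "l2 set"
    by (simp add: open_l2_def)
  show "inner x y = inner y x"
    unfolding inner_l2_def by (metis cinner_commute_cnj cnj.simps(1))
  show "inner (x + y) z = inner x z + inner y z"
    unfolding inner_l2_def cinner_def
    by transfer (simp add: distrib_right infsum_add ell2_cnj_mult_summable)
  show "inner (a *\<^sub>R x) y = a * inner x y"
    unfolding inner_l2_def cinner_def
    by transfer (simp add: mult.assoc infsum_cmult_right ell2_cnj_mult_summable)
  show "0 \<le> inner x x"
    unfolding inner_l2_def cinner_self by (simp add: infsum_nonneg)
  show "(inner x x = 0) = (x = 0)"
  proof
    assume "inner x x = 0"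
    hence "infsum (\<lambda>n. (cmod (seq x n))\<^sup>2) UNIV = 0" unfolding inner_l2_def cinner_self by simp
    hence "\<And>n. (cmod (seq x n))\<^sup>2 = 0"
      using nonneg_infsum_le_0D[OF _ seq_square_summable] by (metis UNIV_I order_refl zero_le_power2)
    thus "x = 0" by (intro l2_eqI) (simp add: zero_l2.rep_eq)
  next
    assume "x = 0" thus "inner x x = 0" unfolding inner_l2_def cinner_def by (simp add: zero_l2.rep_eq)
  qed
  show "norm x = sqrt (inner x x)" by (simp add: norm_l2_def)
qed
end

lemma seq_plus [simp]: "seq (x + y) n = seq x n + seq y n" by (simp add: plus_l2.rep_eq)
lemma seq_minus [simp]: "seq (x - y) n = seq x n - seq y n" by (simp add: minus_l2.rep_eq)
lemma seq_uminus [simp]: "seq (- x) n = - seq x n" by (simp add: uminus_l2.rep_eq)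
lemma seq_scaleR [simp]: "seq (r *\<^sub>R x) n = complex_of_real r * seq x n" by (simp add: scaleR_l2.rep_eq)
lemma seq_zero [simp]: "seq 0 n = 0" by (simp add: zero_l2.rep_eq)
lemma seq_l2_of [simp]: "\<psi> \<in> ell2 \<Longrightarrow> seq (l2_of \<psi>) = \<psi>" by (simp add: l2_of_inverse)

lemma seq_sum: "seq (sum f S) n = (\<Sum>l\<in>S. seq (f l) n)"
  by (induction S rule: infinite_finite_induct) auto

lemma inner_l2_Re_cinner: "inner x y = Re (cinner x y)"
  by (simp add: inner_l2_def)

lemma power2_norm_l2: "(norm x)\<^sup>2 = infsum (\<lambda>n. (cmod (seq x n))\<^sup>2) UNIV"
  by (simp add: power2_norm_eq_inner inner_l2_def cinner_self)

lemma norm_l2_eq_l2norm: "norm x = l2norm (seq x)"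
  unfolding l2norm_def power2_norm_l2[symmetric] by simp

lemma finite_sum_square_le_norm_l2: "finite F \<Longrightarrow> (\<Sum>n\<in>F. (cmod (seq x n))\<^sup>2) \<le> (norm x)\<^sup>2"
  unfolding power2_norm_l2 by (rule finite_sum_le_infsum[OF seq_square_summable]) auto

lemma norm_seq_le_norm_l2: "cmod (seq x n) \<le> norm x"
proof (rule power2_le_imp_le)
  show "(cmod (seq x n))\<^sup>2 \<le> (norm x)\<^sup>2" using finite_sum_square_le_norm_l2[of "{n}" x] by simp
qed simp

lemma bounded_linear_seq: "bounded_linear (\<lambda>x. seq x n)"
  by (rule bounded_linear_intro[where K=1]) (auto simp: scaleR_conv_of_real norm_seq_le_norm_l2)

lemma Cauchy_l2_coordinate:
  assumes "Cauchy X"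
  shows "Cauchy (\<lambda>k. seq (X k) n)"
  unfolding Cauchy_def
proof (intro allI impI)
  fix e :: real assume "e > 0"
  then obtain M where M: "\<forall>m\<ge>M. \<forall>k\<ge>M. dist (X m) (X k) < e" using assms unfolding Cauchy_def by blast
  show "\<exists>M. \<forall>m\<ge>M. \<forall>k\<ge>M. dist (seq (X m) n) (seq (X k) n) < e"
    by (rule exI[of _ M]) (metis M norm_seq_le_norm_l2 seq_minus dist_norm le_less_trans)
qed

lemma Cauchy_l2_tail_bound:
  assumes "Cauchy X" and lim: "\<And>n. (\<lambda>k. seq (X k) n) \<longlonglongrightarrow> f n" and "e > 0"
  shows "\<exists>N. \<forall>k\<ge>N. (\<lambda>n. seq (X k) n - f n) \<in> ell2 \<and>
           infsum (\<lambda>n. (cmod (seq (X k) n - f n))\<^sup>2) UNIV \<le> e\<^sup>2"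
proof -
  obtain M where M: "\<forall>m\<ge>M. \<forall>k\<ge>M. dist (X m) (X k) < e" using assms unfolding Cauchy_def by blast
  have "(\<Sum>n\<in>F. (cmod (seq (X k) n - f n))\<^sup>2) \<le> e\<^sup>2" if "finite F" "k \<ge> M" for F k
  proof (rule tendsto_upperbound)
    show "(\<lambda>j. \<Sum>n\<in>F. (cmod (seq (X k) n - seq (X j) n))\<^sup>2) \<longlonglongrightarrow> (\<Sum>n\<in>F. (cmod (seq (X k) n - f n))\<^sup>2)"
      by (intro tendsto_intros lim)
    show "\<forall>\<^sub>F j in sequentially. (\<Sum>n\<in>F. (cmod (seq (X k) n - seq (X j) n))\<^sup>2) \<le> e\<^sup>2"
    proof (rule eventually_sequentiallyI[of M])
      fix j assume "j \<ge> M"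
      have "(\<Sum>n\<in>F. (cmod (seq (X k) n - seq (X j) n))\<^sup>2) \<le> (norm (X k - X j))\<^sup>2"
        using finite_sum_square_le_norm_l2[OF that(1), of "X k - X j"] by simp
      also have "\<dots> \<le> e\<^sup>2" using M \<open>j \<ge> M\<close> \<open>k \<ge> M\<close> \<open>e > 0\<close>
        by (intro power_mono) (auto simp: dist_norm less_imp_le)
      finally show "(\<Sum>n\<in>F. (cmod (seq (X k) n - seq (X j) n))\<^sup>2) \<le> e\<^sup>2" .
    qed
  qed simp
  thus ?thesis using ell2_bounded_partial_sums[of "\<lambda>n. seq (X _) n - f n" "e\<^sup>2"] by blast
qed

instance l2 :: complete_space
proof
  fix X :: "nat \<Rightarrow> l2"
  assume C: "Cauchy X"
  have "\<forall>n. \<exists>c. (\<lambda>k. seq (X k) n) \<longlonglongrightarrow> c"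
    using Cauchy_l2_coordinate[OF C] Cauchy_convergent_iff convergent_def by blast
  then obtain f where f: "\<And>n. (\<lambda>k. seq (X k) n) \<longlonglongrightarrow> f n" by metis
  obtain N where "(\<lambda>n. seq (X N) n - f n) \<in> ell2" using Cauchy_l2_tail_bound[OF C f, of 1] by auto
  from ell2_diff[OF seq_in_ell2[of "X N"] this] have f_ell2: "f \<in> ell2" by simp
  have "X \<longlonglongrightarrow> l2_of f"
  proof (rule LIMSEQ_I)
    fix r :: real assume "r > 0"
    obtain N where N: "\<forall>k\<ge>N. infsum (\<lambda>n. (cmod (seq (X k) n - f n))\<^sup>2) UNIV \<le> (r/2)\<^sup>2"
      using Cauchy_l2_tail_bound[OF C f, of "r/2"] \<open>r > 0\<close> by auto
    have "norm (X k - l2_of f) < r" if "k \<ge> N" for k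
    proof -
      have "(norm (X k - l2_of f))\<^sup>2 \<le> (r/2)\<^sup>2"
        unfolding power2_norm_l2 using N that f_ell2 by simp
      hence "norm (X k - l2_of f) \<le> r/2" by (rule power2_le_imp_le) (use \<open>r > 0\<close> in simp)
      thus ?thesis using \<open>r > 0\<close> by simp
    qed
    thus "\<exists>no. \<forall>n\<ge>no. norm (X n - l2_of f) < r" by blast
  qed
  thus "convergent X" by (auto simp: convergent_def)
qed

instance l2 :: banach ..

lemma l2_of_delta_nonzero: "l2_of (delta j) \<noteq> 0"
proof
  assume "l2_of (delta j) = 0"
  hence "delta j j = 0" using seq_l2_of[OF delta_ell2] seq_zero by metis
  thus False by (simp add: delta_def)
qed

instance l2 :: perfect_space
proof
  fix x :: l2
  show "\<not> open {x}"
  proof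
    assume "open {x}"
    then obtain e where e: "e > 0" "ball x e \<subseteq> {x}" using open_contains_ball by blast
    define d where "d = (e / (2 * norm (l2_of (delta 0)))) *\<^sub>R l2_of (delta 0)"
    have "norm d = e/2" "d \<noteq> 0" using e l2_of_delta_nonzero[of 0] by (simp_all add: d_def)
    hence "x + d \<in> ball x e" using e by (simp add: dist_norm)
    thus False using e \<open>d \<noteq> 0\<close> by auto
  qed
qed

lemma l2_mass_in_window:
  assumes "finite W" "\<epsilon> > 0" and outside: "\<And>r. r \<notin> W \<Longrightarrow> \<epsilon> * cmod (seq x r) \<le> cmod (seq y r)"
  shows "(norm x)\<^sup>2 - (norm y / \<epsilon>)\<^sup>2 \<le> (\<Sum>r\<in>W. (cmod (seq x r))\<^sup>2)"
proof -
  let ?f = "\<lambda>r. (cmod (seq x r))\<^sup>2" and ?g = "\<lambda>r. (cmod (seq y r))\<^sup>2 * inverse (\<epsilon>\<^sup>2)"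
  have sg: "?g summable_on UNIV"
    by (rule summable_on_cmult_left[OF seq_square_summable])
  have "?f r \<le> ?g r" if "r \<notin> W" for r
  proof -
    have "(\<epsilon> * cmod (seq x r))\<^sup>2 \<le> (cmod (seq y r))\<^sup>2"
      using outside[OF that] \<open>\<epsilon> > 0\<close> by (intro power_mono) auto
    thus ?thesis using \<open>\<epsilon> > 0\<close> by (simp add: power_mult_distrib field_simps)
  qed
  hence "infsum ?f (- W) \<le> infsum ?g (- W)"
    by (intro infsum_mono summable_on_subset_banach[OF seq_square_summable] summable_on_subset_banach[OF sg]) auto
  also have "\<dots> \<le> infsum ?g UNIV"
    by (rule infsum_mono_neutral) (auto intro: summable_on_subset_banach[OF sg])
  also have "\<dots> = (norm y / \<epsilon>)\<^sup>2"
    unfolding power_divide power2_norm_l2 by (simp add: infsum_cmult_left' divide_inverse)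
  finally have "infsum ?f (- W) \<le> (norm y / \<epsilon>)\<^sup>2" .
  moreover have "(norm x)\<^sup>2 = (\<Sum>r\<in>W. ?f r) + infsum ?f (- W)"
    using infsum_Un_disjoint[of ?f W "- W"] assms(1)
    by (auto simp: power2_norm_l2 intro: summable_on_subset_banach[OF seq_square_summable])
  ultimately show ?thesis by linarith
qed

definition truncate :: "int \<Rightarrow> l2 \<Rightarrow> l2" where
  "truncate N x = l2_of (\<lambda>n. if \<bar>n\<bar> \<le> N then seq x n else 0)"

lemma seq_truncate: "seq (truncate N x) = (\<lambda>n. if \<bar>n\<bar> \<le> N then seq x n else 0)"
proof -
  have "(\<lambda>n. if \<bar>n\<bar> \<le> N then seq x n else 0) \<in> ell2"
    by (rule ell2_finite_support, rule finite_subset[of _ "{-N..N}"]) auto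
  thus ?thesis unfolding truncate_def by simp
qed

lemma power2_norm_truncate: "(norm x)\<^sup>2 = (norm (truncate N x))\<^sup>2 + (norm (x - truncate N x))\<^sup>2"
proof -
  let ?f = "\<lambda>n. (cmod (seq x n))\<^sup>2"
  have x_trunc: "seq (x - truncate N x) = (\<lambda>n. if \<bar>n\<bar> \<le> N then 0 else seq x n)"
    by (simp add: seq_truncate fun_eq_iff)
  have "(norm x)\<^sup>2 = infsum ?f ({-N..N} \<union> - {-N..N})" by (simp add: power2_norm_l2)
  also have "\<dots> = infsum ?f {-N..N} + infsum ?f (- {-N..N})"
    by (rule infsum_Un_disjoint) (auto intro: summable_on_subset_banach[OF seq_square_summable])
  also have "infsum ?f {-N..N} = (norm (truncate N x))\<^sup>2"
    unfolding power2_norm_l2 seq_truncate by (rule infsum_cong_neutral) auto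
  also have "infsum ?f (- {-N..N}) = (norm (x - truncate N x))\<^sup>2"
    unfolding power2_norm_l2 x_trunc by (rule infsum_cong_neutral) auto
  finally show ?thesis .
qed

lemma truncate_approx:
  assumes "\<epsilon> > 0"
  shows "\<exists>N. norm (x - truncate N x) \<le> \<epsilon>"
proof -
  let ?f = "\<lambda>n. (cmod (seq x n))\<^sup>2"
  obtain F where F: "finite F" "dist (sum ?f F) (infsum ?f UNIV) \<le> \<epsilon>\<^sup>2"
    using has_sum_finite_approximation[OF has_sum_infsum[OF seq_square_summable], of "\<epsilon>\<^sup>2"] assms by auto
  define N where "N = Max (insert 0 (abs ` F))"
  have FN: "F \<subseteq> {-N..N}"
  proof
    fix n assume "n \<in> F"
    hence "\<bar>n\<bar> \<le> N" unfolding N_def using F(1) by (intro Max_ge) auto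
    thus "n \<in> {-N..N}" by auto
  qed
  have "(norm x)\<^sup>2 = (norm (truncate N x))\<^sup>2 + (norm (x - truncate N x))\<^sup>2"
    by (rule power2_norm_truncate)
  moreover have "sum ?f F \<le> (norm (truncate N x))\<^sup>2"
  proof -
    have "sum ?f F \<le> sum ?f {-N..N}" by (rule sum_mono2[OF _ FN]) auto
    also have "\<dots> = (\<Sum>n\<in>{-N..N}. (cmod (seq (truncate N x) n))\<^sup>2)"
      by (rule sum.cong) (auto simp: seq_truncate)
    also have "\<dots> \<le> (norm (truncate N x))\<^sup>2" by (rule finite_sum_square_le_norm_l2) simp
    finally show ?thesis .
  qed
  moreover have "sum ?f F \<le> (norm x)\<^sup>2"
    using finite_sum_square_le_norm_l2[OF F(1)] .
  ultimately have "(norm (x - truncate N x))\<^sup>2 \<le> \<epsilon>\<^sup>2"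
    using F(2) by (simp add: dist_real_def power2_norm_l2)
  hence "norm (x - truncate N x) \<le> \<epsilon>" by (rule power2_le_imp_le) (use assms in simp)
  thus ?thesis by blast
qed

definition position :: "(int \<Rightarrow> complex) \<Rightarrow> (int \<Rightarrow> complex)" where
  "position \<psi> = (\<lambda>n. of_int n * \<psi> n)"

lemma position_ell2_finite_support:
  assumes "\<And>n. N < \<bar>n\<bar> \<Longrightarrow> \<psi> n = 0"
  shows "position \<psi> \<in> ell2"
proof (rule ell2_finite_support, rule finite_subset[of _ "{-N..N}"])
  show "{n. position \<psi> n \<noteq> 0} \<subseteq> {-N..N}"
    using assms by (force simp: position_def abs_le_iff not_less)
qed simp

section \<open>Bounded operators\<close>

text \<open>A copy of the bounded linear maps with composition as multiplication: this makes them a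
  Banach algebra, so that the library's exponential series applies to operators.\<close>

typedef (overloaded) 'a endo = "UNIV :: ('a::real_normed_vector \<Rightarrow>\<^sub>L 'a) set"
  morphisms endo_apply Endo by simp

setup_lifting type_definition_endo

instantiation endo :: (real_normed_vector) real_normed_vector
begin
lift_definition zero_endo :: "'a endo" is 0 .
lift_definition plus_endo :: "'a endo \<Rightarrow> 'a endo \<Rightarrow> 'a endo" is "(+)" .
lift_definition minus_endo :: "'a endo \<Rightarrow> 'a endo \<Rightarrow> 'a endo" is "(-)" .
lift_definition uminus_endo :: "'a endo \<Rightarrow> 'a endo" is "uminus" .
lift_definition scaleR_endo :: "real \<Rightarrow> 'a endo \<Rightarrow> 'a endo" is "scaleR" .
lift_definition norm_endo :: "'a endo \<Rightarrow> real" is norm .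
definition sgn_endo :: "'a endo \<Rightarrow> 'a endo" where "sgn_endo x = scaleR (inverse (norm x)) x"
definition dist_endo :: "'a endo \<Rightarrow> 'a endo \<Rightarrow> real" where "dist_endo x y = norm (x - y)"
definition uniformity_endo :: "('a endo \<times> 'a endo) filter" where
  "uniformity_endo = (INF e\<in>{0<..}. principal {(x, y). dist x y < e})"
definition open_endo :: "'a endo set \<Rightarrow> bool" where
  "open_endo U = (\<forall>x\<in>U. \<forall>\<^sub>F (x', y) in uniformity. x' = x \<longrightarrow> y \<in> U)"
instance
  apply standard
  unfolding dist_endo_def open_endo_def sgn_endo_def uniformity_endo_def
  apply (rule refl | (transfer, force simp: norm_triangle_ineq algebra_simps))+
  done
end

instantiation endo :: ("{real_normed_vector, perfect_space}") real_normed_algebra_1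
begin
lift_definition one_endo :: "'a endo" is id_blinfun .
lift_definition times_endo :: "'a endo \<Rightarrow> 'a endo \<Rightarrow> 'a endo" is blinfun_compose .
instance
proof
  fix a b c :: "'a endo" and r :: real
  show "a * b * c = a * (b * c)" by transfer (rule blinfun_eqI, simp)
  show "1 * a = a" by transfer (rule blinfun_eqI, simp)
  show "a * 1 = a" by transfer (rule blinfun_eqI, simp)
  show "(a + b) * c = a * c + b * c" by transfer (rule blinfun_eqI, simp add: blinfun.bilinear_simps)
  show "a * (b + c) = a * b + a * c" by transfer (rule blinfun_eqI, simp add: blinfun.bilinear_simps)
  show "(0::'a endo) \<noteq> 1" by transfer (metis norm_blinfun_id norm_zero zero_neq_one)
  show "r *\<^sub>R a * b = r *\<^sub>R (a * b)" by transfer (rule blinfun_eqI, simp add: blinfun.bilinear_simps)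
  show "a * r *\<^sub>R b = r *\<^sub>R (a * b)" by transfer (rule blinfun_eqI, simp add: blinfun.bilinear_simps)
  show "norm (a * b) \<le> norm a * norm b" by transfer (rule norm_blinfun_compose)
  show "norm (1::'a endo) = 1" by transfer simp
qed
end

instance endo :: (banach) banach
proof
  fix X :: "nat \<Rightarrow> 'a endo"
  assume "Cauchy X"
  hence "Cauchy (\<lambda>n. endo_apply (X n))"
    unfolding Cauchy_def dist_endo_def dist_norm by (simp add: norm_endo.rep_eq minus_endo.rep_eq)
  then obtain L where L: "(\<lambda>n. endo_apply (X n)) \<longlonglongrightarrow> L" using Cauchy_convergent_iff convergent_def by blast
  have "X \<longlonglongrightarrow> Endo L"
    using L unfolding tendsto_iff dist_endo_def dist_norm
    by (simp add: norm_endo.rep_eq minus_endo.rep_eq Endo_inverse)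
  thus "convergent X" by (auto simp: convergent_def)
qed

lemma endo_apply_mult [simp]: "endo_apply (a * b) x = endo_apply a (endo_apply b x)"
  by (simp add: times_endo.rep_eq)
lemma endo_apply_one [simp]: "endo_apply 1 x = x"
  by (simp add: one_endo.rep_eq)
lemma endo_apply_add [simp]: "endo_apply (a + b) x = endo_apply a x + endo_apply b x"
  by (simp add: plus_endo.rep_eq blinfun.add_left)
lemma endo_apply_diff [simp]: "endo_apply (a - b) x = endo_apply a x - endo_apply b x"
  by (simp add: minus_endo.rep_eq blinfun.diff_left)
lemma endo_apply_uminus [simp]: "endo_apply (- a) x = - endo_apply a x"
  by (simp add: uminus_endo.rep_eq blinfun.minus_left)
lemma endo_apply_scaleR [simp]: "endo_apply (r *\<^sub>R a) x = r *\<^sub>R endo_apply a x"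
  by (simp add: scaleR_endo.rep_eq blinfun.scaleR_left)
lemma endo_apply_zero [simp]: "endo_apply 0 x = 0"
  by (simp add: zero_endo.rep_eq)

lemma norm_endo_apply_le: "norm (endo_apply a x) \<le> norm a * norm x"
  by (simp add: norm_endo.rep_eq norm_blinfun)

lemma endo_apply_Endo_Blinfun: "bounded_linear f \<Longrightarrow> endo_apply (Endo (Blinfun f)) x = f x"
  by (simp add: Endo_inverse bounded_linear_Blinfun_apply)

lemma bounded_linear_endo_apply: "bounded_linear (\<lambda>a. endo_apply a x)"
  by (rule bounded_linear_intro[where K="norm x"])
    (simp_all add: blinfun.bilinear_simps, metis norm_endo_apply_le mult.commute)

lemma bounded_bilinear_endo_apply: "bounded_bilinear (\<lambda>(a::'a::real_normed_vector endo) x. endo_apply a x)"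
proof (rule bounded_bilinear.intro)
  fix a b :: "'a endo" and x y :: 'a and r :: real
  show "endo_apply (a + b) x = endo_apply a x + endo_apply b x" by simp
  show "endo_apply a (x + y) = endo_apply a x + endo_apply a y" by (simp add: blinfun.add_right)
  show "endo_apply (r *\<^sub>R a) x = r *\<^sub>R endo_apply a x" by simp
  show "endo_apply a (r *\<^sub>R x) = r *\<^sub>R endo_apply a x" by (simp add: blinfun.scaleR_right)
  show "\<exists>K. \<forall>a x. norm (endo_apply a x) \<le> norm a * norm x * K"
    by (rule exI[of _ 1]) (simp add: norm_endo_apply_le)
qed

lemma bounded_linear_exp_sums:
  fixes Y :: "'a::{banach, real_normed_algebra_1}"
  assumes "bounded_linear g"
  shows "(\<lambda>k. g (Y ^ k /\<^sub>R fact k)) sums g (exp Y)"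
  by (rule bounded_linear.sums[OF assms exp_converges])

definition seq_linear :: "((int \<Rightarrow> complex) \<Rightarrow> (int \<Rightarrow> complex)) \<Rightarrow> bool" where
  "seq_linear L \<longleftrightarrow> (\<forall>\<psi> \<phi>. L (\<lambda>n. \<psi> n + \<phi> n) = (\<lambda>n. L \<psi> n + L \<phi> n)) \<and>
     (\<forall>c \<psi>. L (\<lambda>n. c * \<psi> n) = (\<lambda>n. c * L \<psi> n))"

definition seq_bounded :: "((int \<Rightarrow> complex) \<Rightarrow> (int \<Rightarrow> complex)) \<Rightarrow> real \<Rightarrow> bool" where
  "seq_bounded L K \<longleftrightarrow> (\<forall>\<psi>\<in>ell2. L \<psi> \<in> ell2 \<and> l2norm (L \<psi>) \<le> K * l2norm \<psi>)"

definition endo_of_seq_map :: "((int \<Rightarrow> complex) \<Rightarrow> (int \<Rightarrow> complex)) \<Rightarrow> l2 endo" where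
  "endo_of_seq_map L = Endo (Blinfun (\<lambda>x. l2_of (L (seq x))))"

lemma bounded_linear_seq_map:
  assumes "seq_linear L" "seq_bounded L K"
  shows "bounded_linear (\<lambda>x. l2_of (L (seq x)))"
proof (rule bounded_linear_intro[where K=K])
  fix x y :: l2 and r :: real
  have e: "L (seq x) \<in> ell2" "L (seq y) \<in> ell2" using assms(2) unfolding seq_bounded_def by auto
  have "seq (x + y) = (\<lambda>n. seq x n + seq y n)" by auto
  hence "L (seq (x + y)) = (\<lambda>n. L (seq x) n + L (seq y) n)" using assms(1) unfolding seq_linear_def by metis
  thus "l2_of (L (seq (x + y))) = l2_of (L (seq x)) + l2_of (L (seq y))"
    by (intro l2_eqI) (simp add: e ell2_add)
  have "seq (r *\<^sub>R x) = (\<lambda>n. complex_of_real r * seq x n)" by auto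
  hence "L (seq (r *\<^sub>R x)) = (\<lambda>n. complex_of_real r * L (seq x) n)" using assms(1) unfolding seq_linear_def by metis
  thus "l2_of (L (seq (r *\<^sub>R x))) = r *\<^sub>R l2_of (L (seq x))"
    by (intro l2_eqI) (simp add: e ell2_scale)
  show "norm (l2_of (L (seq x))) \<le> norm x * K"
    using assms(2) e unfolding seq_bounded_def by (simp add: norm_l2_eq_l2norm mult.commute)
qed

lemma seq_endo_of_seq_map:
  assumes "seq_linear L" "seq_bounded L K"
  shows "seq (endo_apply (endo_of_seq_map L) x) = L (seq x)"
proof -
  have "L (seq x) \<in> ell2" using assms(2) unfolding seq_bounded_def by auto
  thus ?thesis unfolding endo_of_seq_map_def using endo_apply_Endo_Blinfun[OF bounded_linear_seq_map[OF assms]] by simp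
qed

definition shift_left :: "(int \<Rightarrow> complex) \<Rightarrow> (int \<Rightarrow> complex)" where
  "shift_left \<psi> = (\<lambda>n. \<psi> (n + 1))"
definition shift_right :: "(int \<Rightarrow> complex) \<Rightarrow> (int \<Rightarrow> complex)" where
  "shift_right \<psi> = (\<lambda>n. \<psi> (n - 1))"
definition mult_seq :: "(int \<Rightarrow> complex) \<Rightarrow> (int \<Rightarrow> complex) \<Rightarrow> (int \<Rightarrow> complex)" where
  "mult_seq g \<psi> = (\<lambda>n. g n * \<psi> n)"

lemma seq_linear_shift_left: "seq_linear shift_left"
  unfolding seq_linear_def shift_left_def by auto
lemma seq_linear_shift_right: "seq_linear shift_right"
  unfolding seq_linear_def shift_right_def by auto
lemma seq_linear_mult_seq: "seq_linear (mult_seq g)"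
  unfolding seq_linear_def mult_seq_def by (auto simp: algebra_simps)

lemma infsum_shift_int:
  fixes f :: "int \<Rightarrow> real"
  shows "infsum (\<lambda>n. f (n + d)) UNIV = infsum f UNIV"
    and "(\<lambda>n. f (n + d)) summable_on UNIV \<longleftrightarrow> f summable_on UNIV"
proof -
  have b: "bij_betw (\<lambda>n. n + d) UNIV UNIV" by (rule bij_betwI[where g="\<lambda>n. n - d"]) auto
  show "infsum (\<lambda>n. f (n + d)) UNIV = infsum f UNIV" by (rule infsum_reindex_bij_betw[OF b])
  show "(\<lambda>n. f (n + d)) summable_on UNIV \<longleftrightarrow> f summable_on UNIV"
    using summable_on_reindex_bij_betw[OF b, of f] by blast
qed

lemma seq_bounded_shift_left: "seq_bounded shift_left 1"
  unfolding seq_bounded_def ell2_def l2norm_def shift_left_def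
  using infsum_shift_int[of "\<lambda>n. (cmod (_ n))\<^sup>2" 1] by auto

lemma seq_bounded_shift_right: "seq_bounded shift_right 1"
  unfolding seq_bounded_def ell2_def l2norm_def shift_right_def
  using infsum_shift_int[of "\<lambda>n. (cmod (_ n))\<^sup>2" "-1"] by auto

lemma seq_bounded_mult_seq:
  assumes "\<And>n. cmod (g n) \<le> M"
  shows "seq_bounded (mult_seq g) M"
  unfolding seq_bounded_def
proof (intro ballI conjI)
  fix \<psi> assume "\<psi> \<in> ell2"
  hence s: "(\<lambda>n. (cmod (\<psi> n))\<^sup>2) summable_on UNIV" unfolding ell2_def by simp
  have M0: "0 \<le> M" using assms[of 0] norm_ge_zero order_trans by blast
  have le: "(cmod (mult_seq g \<psi> n))\<^sup>2 \<le> M\<^sup>2 * (cmod (\<psi> n))\<^sup>2" for n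
    unfolding mult_seq_def norm_mult power_mult_distrib
    by (intro mult_right_mono power_mono assms) auto
  have s2: "(\<lambda>n. M\<^sup>2 * (cmod (\<psi> n))\<^sup>2) summable_on UNIV" using s by (rule summable_on_cmult_right)
  show "mult_seq g \<psi> \<in> ell2" unfolding ell2_def mem_Collect_eq
    by (rule summable_on_comparison_test[OF s2]) (use le in auto)
  hence s3: "(\<lambda>n. (cmod (mult_seq g \<psi> n))\<^sup>2) summable_on UNIV" unfolding ell2_def by simp
  have "infsum (\<lambda>n. (cmod (mult_seq g \<psi> n))\<^sup>2) UNIV \<le> infsum (\<lambda>n. M\<^sup>2 * (cmod (\<psi> n))\<^sup>2) UNIV"
    by (rule infsum_mono[OF s3 s2 le])
  also have "\<dots> = M\<^sup>2 * infsum (\<lambda>n. (cmod (\<psi> n))\<^sup>2) UNIV" by (rule infsum_cmult_right')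
  finally have "l2norm (mult_seq g \<psi>) \<le> sqrt (M\<^sup>2 * infsum (\<lambda>n. (cmod (\<psi> n))\<^sup>2) UNIV)"
    unfolding l2norm_def by (rule real_sqrt_le_mono)
  thus "l2norm (mult_seq g \<psi>) \<le> M * l2norm \<psi>" unfolding l2norm_def using M0 by (simp add: real_sqrt_mult)
qed

definition Lshift :: "l2 endo" where "Lshift = endo_of_seq_map shift_left"
definition Rshift :: "l2 endo" where "Rshift = endo_of_seq_map shift_right"
definition Imult :: "l2 endo" where "Imult = endo_of_seq_map (mult_seq (\<lambda>_. \<i>))"

lemma seq_Lshift: "seq (endo_apply Lshift x) = shift_left (seq x)"
  unfolding Lshift_def by (rule seq_endo_of_seq_map[OF seq_linear_shift_left seq_bounded_shift_left])
lemma seq_Rshift: "seq (endo_apply Rshift x) = shift_right (seq x)"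
  unfolding Rshift_def by (rule seq_endo_of_seq_map[OF seq_linear_shift_right seq_bounded_shift_right])
lemma seq_Imult: "seq (endo_apply Imult x) = (\<lambda>n. \<i> * seq x n)"
  unfolding Imult_def using seq_endo_of_seq_map[OF seq_linear_mult_seq seq_bounded_mult_seq[of "\<lambda>_. \<i>" 1]]
  by (simp add: mult_seq_def)

lemma norm_Lshift_le: "norm (endo_apply Lshift x) \<le> norm x"
  using seq_bounded_shift_left unfolding seq_bounded_def by (simp add: norm_l2_eq_l2norm seq_Lshift)
lemma norm_Rshift_le: "norm (endo_apply Rshift x) \<le> norm x"
  using seq_bounded_shift_right unfolding seq_bounded_def by (simp add: norm_l2_eq_l2norm seq_Rshift)

definition Aop :: "l2 endo" where "Aop = Imult * (Lshift - Rshift)"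

lemma seq_Aop: "seq (endo_apply Aop x) = opA (seq x)"
  unfolding Aop_def opA_def by (simp add: seq_Imult seq_Lshift seq_Rshift shift_left_def shift_right_def fun_eq_iff)

definition cscale :: "complex \<Rightarrow> l2 \<Rightarrow> l2" where
  "cscale c x = l2_of (\<lambda>n. c * seq x n)"

lemma seq_cscale [simp]: "seq (cscale c x) = (\<lambda>n. c * seq x n)"
  unfolding cscale_def by (simp add: ell2_scale)

lemma l2_delta_expansion:
  assumes "\<And>n. N < \<bar>n\<bar> \<Longrightarrow> seq v n = 0"
  shows "v = (\<Sum>l\<in>{-N..N}. cscale (seq v l) (l2_of (delta l)))"
proof (rule l2_eqI)
  fix n
  have "(\<Sum>l\<in>{-N..N}. seq v l * delta l n) = (\<Sum>l\<in>{-N..N}. if l = n then seq v n else 0)"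
    by (rule sum.cong) (auto simp: delta_def)
  also have "\<dots> = seq v n" using assms[of n] by auto
  finally show "seq v n = seq (\<Sum>l\<in>{-N..N}. cscale (seq v l) (l2_of (delta l))) n"
    by (simp add: seq_sum delta_ell2)
qed

lemma Imult_cscale: "endo_apply Imult x = cscale \<i> x"
  by (rule l2_eqI) (simp add: seq_Imult)

lemma norm_cscale_i: "norm (cscale \<i> x) = norm x"
  unfolding norm_l2_eq_l2norm l2norm_def by (simp add: norm_mult)

lemma norm_Aop_le: "norm (endo_apply Aop x) \<le> 2 * norm x"
proof -
  have "norm (endo_apply Aop x) = norm (endo_apply Lshift x - endo_apply Rshift x)"
    unfolding Aop_def by (simp add: Imult_cscale norm_cscale_i)
  also have "\<dots> \<le> norm (endo_apply Lshift x) + norm (endo_apply Rshift x)" by (rule norm_triangle_ineq4)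
  also have "\<dots> \<le> 2 * norm x" using norm_Lshift_le[of x] norm_Rshift_le[of x] by simp
  finally show ?thesis .
qed

lemma cinner_add_left: "cinner (x + y) z = cinner x z + cinner y z"
  unfolding cinner_def by (simp add: distrib_right infsum_add ell2_cnj_mult_summable)
lemma cinner_add_right: "cinner z (x + y) = cinner z x + cinner z y"
  unfolding cinner_def by (simp add: distrib_left infsum_add ell2_cnj_mult_summable)
lemma cinner_diff_left: "cinner (x - y) z = cinner x z - cinner y z"
  using cinner_add_left[of "x - y" y z] by simp
lemma cinner_diff_right: "cinner z (x - y) = cinner z x - cinner z y"
  using cinner_add_right[of z "x - y" y] by simp
lemma cinner_cscale_left: "cinner (cscale c x) y = cnj c * cinner x y"
  unfolding cinner_def by (simp add: mult.assoc infsum_cmult_right ell2_cnj_mult_summable)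
lemma cinner_cscale_right: "cinner x (cscale c y) = c * cinner x y"
  unfolding cinner_def by (simp add: mult.left_commute[of "cnj _"] infsum_cmult_right ell2_cnj_mult_summable)

lemma cinner_Lshift_left: "cinner (endo_apply Lshift x) y = cinner x (endo_apply Rshift y)"
proof -
  have b: "bij_betw (\<lambda>n. n - 1) UNIV (UNIV::int set)" by (rule bij_betwI[where g="\<lambda>n. n + 1"]) auto
  have "cinner (endo_apply Lshift x) y = infsum (\<lambda>n. cnj (seq x (n + 1)) * seq y n) UNIV"
    unfolding cinner_def seq_Lshift shift_left_def by simp
  also have "\<dots> = infsum (\<lambda>n. cnj (seq x ((n - 1) + 1)) * seq y (n - 1)) UNIV"
    using infsum_reindex_bij_betw[OF b, of "\<lambda>n. cnj (seq x (n + 1)) * seq y n"] by simp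
  also have "\<dots> = cinner x (endo_apply Rshift y)" unfolding cinner_def seq_Rshift shift_right_def by simp
  finally show ?thesis .
qed

lemma cinner_Rshift_left: "cinner (endo_apply Rshift x) y = cinner x (endo_apply Lshift y)"
  by (metis cinner_Lshift_left cinner_commute_cnj)

lemma inner_Aop_symmetric: "inner (endo_apply Aop x) y = inner x (endo_apply Aop y)"
  unfolding inner_l2_Re_cinner Aop_def
  by (simp add: Imult_cscale cinner_cscale_left cinner_cscale_right cinner_diff_left cinner_diff_right
      cinner_Lshift_left cinner_Rshift_left algebra_simps)

section \<open>The Schroedinger propagator\<close>

lemma schrH_add: "schrH \<nu> (\<lambda>n. \<psi> n + \<phi> n) = (\<lambda>n. schrH \<nu> \<psi> n + schrH \<nu> \<phi> n)"
  unfolding schrH_def by (auto simp: algebra_simps)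
lemma schrH_mult: "schrH \<nu> (\<lambda>n. c * \<psi> n) = (\<lambda>n. c * schrH \<nu> \<psi> n)"
  unfolding schrH_def by (auto simp: algebra_simps)
lemma schrH_power_mult: "(schrH \<nu> ^^ k) (\<lambda>n. c * \<psi> n) = (\<lambda>n. c * (schrH \<nu> ^^ k) \<psi> n)"
  by (induction k) (auto simp: schrH_mult)

locale schroedinger =
  fixes \<nu> :: "int \<Rightarrow> real"
  assumes bounded_potential: "bounded (range \<nu>)"
begin

definition Vop :: "l2 endo" where "Vop = endo_of_seq_map (mult_seq (\<lambda>n. complex_of_real (\<nu> n)))"

lemma seq_Vop: "seq (endo_apply Vop x) = (\<lambda>n. complex_of_real (\<nu> n) * seq x n)"
proof -
  obtain M where "\<And>n. \<bar>\<nu> n\<bar> \<le> M" using bounded_potential unfolding bounded_iff by auto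
  thus ?thesis unfolding Vop_def
    using seq_endo_of_seq_map[OF seq_linear_mult_seq seq_bounded_mult_seq[of "\<lambda>n. complex_of_real (\<nu> n)" M]]
    by (simp add: mult_seq_def)
qed

definition Hop :: "l2 endo" where "Hop = Lshift + Rshift + Vop"

lemma seq_Hop: "seq (endo_apply Hop x) = schrH \<nu> (seq x)"
  unfolding Hop_def schrH_def by (simp add: seq_Lshift seq_Rshift seq_Vop shift_left_def shift_right_def fun_eq_iff)

definition Gen :: "l2 endo" where "Gen = - (Imult * Hop)"

definition gen_seq :: "(int \<Rightarrow> complex) \<Rightarrow> (int \<Rightarrow> complex)" where
  "gen_seq \<psi> = (\<lambda>n. - \<i> * schrH \<nu> \<psi> n)"

definition gen_seq_pow :: "nat \<Rightarrow> (int \<Rightarrow> complex) \<Rightarrow> (int \<Rightarrow> complex)" where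
  "gen_seq_pow k \<psi> = (\<lambda>n. (- \<i>) ^ k * (schrH \<nu> ^^ k) \<psi> n)"

lemma gen_seq_add: "gen_seq (\<lambda>n. \<psi> n + \<phi> n) = (\<lambda>n. gen_seq \<psi> n + gen_seq \<phi> n)"
  unfolding gen_seq_def schrH_add by (simp add: algebra_simps)

lemma gen_seq_pow_Suc: "gen_seq_pow (Suc k) \<psi> = gen_seq (gen_seq_pow k \<psi>)"
  unfolding gen_seq_pow_def gen_seq_def by (simp add: schrH_mult mult.assoc)

lemma gen_seq_pow_mult: "gen_seq_pow k (\<lambda>n. c * \<psi> n) = (\<lambda>n. c * gen_seq_pow k \<psi> n)"
  unfolding gen_seq_pow_def schrH_power_mult by (simp add: fun_eq_iff mult.left_commute)

lemma seq_Gen: "seq (endo_apply Gen x) = gen_seq (seq x)"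
  unfolding Gen_def gen_seq_def by (simp add: seq_Imult seq_Hop fun_eq_iff)

lemma seq_Gen_power: "seq (endo_apply (Gen ^ k) x) = gen_seq_pow k (seq x)"
proof (induction k arbitrary: x)
  case 0 show ?case by (simp add: gen_seq_pow_def)
next
  case (Suc k) thus ?case by (simp add: seq_Gen gen_seq_pow_Suc)
qed

lemma Gen_cscale: "endo_apply Gen x = cscale (- \<i>) (endo_apply Hop x)"
  by (rule l2_eqI) (simp add: seq_Gen gen_seq_def seq_Hop)

lemma cinner_Hop_left: "cinner (endo_apply Hop x) y = cinner x (endo_apply Hop y)"
proof -
  have "cinner (endo_apply Vop x) y = cinner x (endo_apply Vop y)"
    unfolding cinner_def seq_Vop by (simp add: mult_ac)
  thus ?thesis unfolding Hop_def
    by (simp add: cinner_add_left cinner_add_right cinner_Lshift_left cinner_Rshift_left)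
qed

lemma inner_Gen_skew: "inner (endo_apply Gen x) y + inner x (endo_apply Gen y) = 0"
  unfolding inner_l2_Re_cinner Gen_cscale cinner_cscale_left cinner_cscale_right cinner_Hop_left
  by simp

definition U :: "real \<Rightarrow> l2 endo" where "U t = exp (t *\<^sub>R Gen)"

lemma bounded_linear_seq_endo_apply: "bounded_linear (\<lambda>a. seq (endo_apply a x) n)"
  using bounded_linear_compose[OF bounded_linear_seq bounded_linear_endo_apply] .

lemma U_sums:
  "(\<lambda>k. complex_of_real (t ^ k / fact k) * gen_seq_pow k (seq x) n) sums seq (endo_apply (U t) x) n"
  using bounded_linear_exp_sums[OF bounded_linear_seq_endo_apply, of "t *\<^sub>R Gen" x n]
  unfolding U_def by (simp add: scaleR_power seq_Gen_power divide_inverse_commute)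

lemma evol_eq_U:
  assumes "\<psi> \<in> ell2"
  shows "evol \<nu> t \<psi> = seq (endo_apply (U t) (l2_of \<psi>))"
proof
  fix n
  have "(- \<i> * complex_of_real t) ^ k / of_nat (fact k) * (schrH \<nu> ^^ k) \<psi> n =
        complex_of_real (t ^ k / fact k) * gen_seq_pow k \<psi> n" for k
    unfolding gen_seq_pow_def power_mult_distrib by (simp add: field_simps)
  thus "evol \<nu> t \<psi> n = seq (endo_apply (U t) (l2_of \<psi>)) n"
    using sums_unique[OF U_sums[of t "l2_of \<psi>" n]] assms unfolding evol_def by simp
qed

lemma U_add: "U s * U t = U (s + t)"
  unfolding U_def by (simp add: exp_add_commuting[symmetric] scaleR_add_left)

lemma U_inverse_left [simp]: "endo_apply (U (- t)) (endo_apply (U t) x) = x"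
proof -
  have "U (- t) * U t = 1" unfolding U_add by (simp add: U_def)
  thus ?thesis by (metis endo_apply_mult endo_apply_one)
qed

lemma U_inverse_right [simp]: "endo_apply (U t) (endo_apply (U (- t)) x) = x"
  using U_inverse_left[of "- t"] by simp

lemma U_has_derivative:
  "((\<lambda>t. U t) has_vector_derivative Gen * U t) (at t within S)"
  unfolding U_def using exp_scaleR_has_vector_derivative_left has_vector_derivative_at_within by blast

lemma U_apply_has_derivative:
  "((\<lambda>t. endo_apply (U t) x) has_vector_derivative endo_apply Gen (endo_apply (U t) x)) (at t within S)"
  using bounded_linear.has_vector_derivative[OF bounded_linear_endo_apply U_has_derivative, of x] by simp

lemma inner_U_U: "inner (endo_apply (U t) x) (endo_apply (U t) y) = inner x y"
proof -
  let ?f = "\<lambda>t. inner (endo_apply (U t) x) (endo_apply (U t) y)"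
  have "(?f has_vector_derivative 0) (at s)" for s
  proof -
    have "(?f has_vector_derivative
          (inner (endo_apply (U s) x) (endo_apply Gen (endo_apply (U s) y)) +
           inner (endo_apply Gen (endo_apply (U s) x)) (endo_apply (U s) y))) (at s)"
      by (rule bounded_bilinear.has_vector_derivative[OF bounded_bilinear_inner
            U_apply_has_derivative U_apply_has_derivative])
    thus ?thesis using inner_Gen_skew[of "endo_apply (U s) x" "endo_apply (U s) y"] by (simp add: add.commute)
  qed
  hence "\<And>s. (?f has_real_derivative 0) (at s)"
    by (simp add: has_real_derivative_iff_has_vector_derivative)
  hence "?f t = ?f 0" using DERIV_isconst_all by blast
  thus ?thesis by (simp add: U_def)
qed

lemma norm_U [simp]: "norm (endo_apply (U t) x) = norm x"
  using inner_U_U[of t x x] by (simp add: norm_eq_sqrt_inner)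

lemma inner_U_adjoint: "inner (endo_apply (U (- t)) x) y = inner x (endo_apply (U t) y)"
  using inner_U_U[of t "endo_apply (U (- t)) x" y] by simp

lemma U_cscale: "endo_apply (U t) (cscale c x) = cscale c (endo_apply (U t) x)"
proof (rule l2_eqI)
  fix n
  have "(\<lambda>k. complex_of_real (t ^ k / fact k) * gen_seq_pow k (seq (cscale c x)) n) =
        (\<lambda>k. c * (complex_of_real (t ^ k / fact k) * gen_seq_pow k (seq x) n))"
    by (simp add: gen_seq_pow_mult mult_ac)
  thus "seq (endo_apply (U t) (cscale c x)) n = seq (cscale c (endo_apply (U t) x)) n"
    using U_sums[of t "cscale c x" n] sums_mult[OF U_sums[of t x n], of c] sums_unique2 by simp
qed

lemma continuous_on_U: "continuous_on S U"
  using U_has_derivative has_vector_derivative_continuous continuous_at_imp_continuous_on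
  by (metis continuous_on_eq_continuous_within)

end

context schroedinger
begin

definition heis_l2 :: "l2 \<Rightarrow> real \<Rightarrow> l2" where
  "heis_l2 x t = endo_apply (U (- t)) (endo_apply Aop (endo_apply (U t) x))"

lemma continuous_on_heis_l2: "continuous_on S (heis_l2 x)"
proof -
  have c1: "continuous_on S (\<lambda>t. U (- t))"
    using continuous_on_compose2[OF continuous_on_U[of UNIV] continuous_on_minus[OF continuous_on_id]] by auto
  have c2: "continuous_on S (\<lambda>t. endo_apply Aop (endo_apply (U t) x))"
    by (rule continuous_on_compose2[of UNIV "\<lambda>v. endo_apply Aop v"])
      (auto intro: linear_continuous_on blinfun.bounded_linear_right
        bounded_bilinear.continuous_on[OF bounded_bilinear_endo_apply continuous_on_U continuous_on_const])
  show ?thesis unfolding heis_l2_def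
    by (rule bounded_bilinear.continuous_on[OF bounded_bilinear_endo_apply c1 c2])
qed

lemma heis_l2_integrable: "heis_l2 x integrable_on {a..b}"
  by (rule integrable_continuous_interval[OF continuous_on_heis_l2])

lemma heis_eq_heis_l2:
  assumes "\<psi> \<in> ell2"
  shows "heis \<nu> t \<psi> = seq (heis_l2 (l2_of \<psi>) t)"
proof -
  have "opA (evol \<nu> t \<psi>) = seq (endo_apply Aop (endo_apply (U t) (l2_of \<psi>)))"
    by (simp add: evol_eq_U[OF assms] seq_Aop)
  thus ?thesis unfolding heis_def heis_l2_def by (simp add: evol_eq_U seq_inverse)
qed

lemma heis_l2_add: "heis_l2 (x + y) t = heis_l2 x t + heis_l2 y t"
  unfolding heis_l2_def by (simp add: blinfun.add_right)

lemma heis_l2_scaleR: "heis_l2 (r *\<^sub>R x) t = r *\<^sub>R heis_l2 x t"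
  unfolding heis_l2_def by (simp add: blinfun.scaleR_right)

lemma norm_heis_l2_le: "norm (heis_l2 x t) \<le> 2 * norm x"
  unfolding heis_l2_def using norm_Aop_le[of "endo_apply (U t) x"] by simp

lemma inner_heis_l2_symmetric: "inner (heis_l2 x t) y = inner x (heis_l2 y t)"
proof -
  have "inner (heis_l2 x t) y = inner (endo_apply Aop (endo_apply (U t) x)) (endo_apply (U t) y)"
    unfolding heis_l2_def by (rule inner_U_adjoint)
  also have "\<dots> = inner (endo_apply (U t) x) (endo_apply Aop (endo_apply (U t) y))"
    by (rule inner_Aop_symmetric)
  also have "\<dots> = inner x (heis_l2 y t)"
    unfolding heis_l2_def using inner_U_adjoint[of "-t" x] by simp
  finally show ?thesis .
qed

definition tavg_l2 :: "real \<Rightarrow> l2 \<Rightarrow> l2" where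
  "tavg_l2 T x = (1 / T) *\<^sub>R integral {0..T} (heis_l2 x)"

lemma tavg_eq_tavg_l2:
  assumes "\<psi> \<in> ell2"
  shows "tavg \<nu> T \<psi> = seq (tavg_l2 T (l2_of \<psi>))"
proof
  fix n
  have "integral {0..T} (\<lambda>t. heis \<nu> t \<psi> n) = integral {0..T} ((\<lambda>v. seq v n) \<circ> heis_l2 (l2_of \<psi>))"
    by (simp add: heis_eq_heis_l2[OF assms] o_def)
  also have "\<dots> = seq (integral {0..T} (heis_l2 (l2_of \<psi>))) n"
    by (rule integral_linear[OF heis_l2_integrable bounded_linear_seq])
  finally show "tavg \<nu> T \<psi> n = seq (tavg_l2 T (l2_of \<psi>)) n"
    unfolding tavg_def tavg_l2_def by simp
qed

lemma tavg_l2_add: "tavg_l2 T (x + y) = tavg_l2 T x + tavg_l2 T y"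
  unfolding tavg_l2_def heis_l2_add
  by (simp add: integral_add[OF heis_l2_integrable heis_l2_integrable] scaleR_add_right)

lemma tavg_l2_scaleR: "tavg_l2 T (r *\<^sub>R x) = r *\<^sub>R tavg_l2 T x"
  unfolding tavg_l2_def heis_l2_scaleR by simp

lemma norm_tavg_l2_le:
  assumes "T > 0"
  shows "norm (tavg_l2 T x) \<le> 2 * norm x"
proof -
  have "norm (integral {0..T} (heis_l2 x)) \<le> integral {0..T} (\<lambda>_. 2 * norm x)"
    by (rule integral_norm_bound_integral[OF heis_l2_integrable]) (auto simp: norm_heis_l2_le)
  also have "\<dots> = T * (2 * norm x)" using assms by simp
  finally show ?thesis unfolding tavg_l2_def using assms by (simp add: field_simps)
qed

lemma inner_tavg_l2_symmetric: "inner (tavg_l2 T x) y = inner x (tavg_l2 T y)"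
proof -
  have "inner (integral {0..T} (heis_l2 x)) y = integral {0..T} ((\<lambda>z. inner z y) \<circ> heis_l2 x)"
    by (rule integral_linear[OF heis_l2_integrable bounded_linear_inner_left, symmetric])
  also have "\<dots> = integral {0..T} ((\<lambda>z. inner x z) \<circ> heis_l2 y)"
    by (simp add: o_def inner_heis_l2_symmetric)
  also have "\<dots> = inner x (integral {0..T} (heis_l2 y))"
    by (rule integral_linear[OF heis_l2_integrable bounded_linear_inner_right])
  finally show ?thesis unfolding tavg_l2_def by simp
qed

end

section \<open>Position and the Duhamel formula\<close>

text \<open>The position operator X is unbounded, so X U(t) x is computed coefficientwise from the
  exponential series. With G = -iH the commutators satisfy [X, G^(k+1)] = G [X, G^k] + A G^k, so they
  are the upper right corners of the powers of the block operator ((G, A), (0, G)); the corner of its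
  exponential is the Duhamel integral of U(t - s) A U(s) over [0, t].\<close>

context schroedinger
begin

fun position_comm :: "nat \<Rightarrow> (int \<Rightarrow> complex) \<Rightarrow> (int \<Rightarrow> complex)" where
  "position_comm 0 \<psi> = (\<lambda>n. 0)"
| "position_comm (Suc k) \<psi> = (\<lambda>n. gen_seq (position_comm k \<psi>) n + opA (gen_seq_pow k \<psi>) n)"

lemma position_gen_seq: "position (gen_seq \<psi>) = (\<lambda>n. gen_seq (position \<psi>) n + opA \<psi> n)"
  unfolding position_def gen_seq_def schrH_def opA_def by (auto simp: algebra_simps)

lemma position_gen_seq_pow:
  "position (gen_seq_pow k \<psi>) = (\<lambda>n. gen_seq_pow k (position \<psi>) n + position_comm k \<psi> n)"
proof (induction k)
  case 0 thus ?case by (simp add: gen_seq_pow_def position_def)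
next
  case (Suc k)
  have "position (gen_seq_pow (Suc k) \<psi>) = (\<lambda>n. gen_seq (position (gen_seq_pow k \<psi>)) n + opA (gen_seq_pow k \<psi>) n)"
    by (simp add: gen_seq_pow_Suc position_gen_seq)
  also have "\<dots> = (\<lambda>n. gen_seq_pow (Suc k) (position \<psi>) n + position_comm (Suc k) \<psi> n)"
    by (simp add: Suc gen_seq_add gen_seq_pow_Suc add.assoc)
  finally show ?case .
qed

definition block_map :: "l2 \<times> l2 \<Rightarrow> l2 \<times> l2" where
  "block_map p = (endo_apply Gen (fst p) + endo_apply Aop (snd p), endo_apply Gen (snd p))"

lemma bounded_linear_block_map: "bounded_linear block_map"
  unfolding block_map_def
  by (intro bounded_linear_Pair bounded_linear_add
      bounded_linear_compose[OF blinfun.bounded_linear_right] bounded_linear_fst bounded_linear_snd)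

definition Block :: "(l2 \<times> l2) endo" where "Block = Endo (Blinfun block_map)"

lemma endo_apply_Block: "endo_apply Block p = block_map p"
  unfolding Block_def by (rule endo_apply_Endo_Blinfun[OF bounded_linear_block_map])

fun block_corner :: "nat \<Rightarrow> l2 \<Rightarrow> l2" where
  "block_corner 0 x = 0"
| "block_corner (Suc k) x = endo_apply Gen (block_corner k x) + endo_apply Aop (endo_apply (Gen ^ k) x)"

lemma Block_power_apply: "endo_apply (Block ^ k) (0, x) = (block_corner k x, endo_apply (Gen ^ k) x)"
  by (induction k) (simp_all add: endo_apply_Block block_map_def)

lemma seq_block_corner: "seq (block_corner k x) = position_comm k (seq x)"
proof (induction k)
  case 0 show ?case by (simp add: fun_eq_iff)
next
  case (Suc k) thus ?case by (simp add: seq_Gen seq_Aop seq_Gen_power)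
qed

definition block_flow :: "real \<Rightarrow> l2 \<Rightarrow> l2 \<times> l2" where
  "block_flow t x = endo_apply (exp (t *\<^sub>R Block)) (0, x)"

lemma block_flow_fst_sums:
  "(\<lambda>k. complex_of_real (t ^ k / fact k) * position_comm k (seq x) n) sums seq (fst (block_flow t x)) n"
proof -
  have "bounded_linear (\<lambda>a. seq (fst (endo_apply a (0::l2, x))) n)"
    by (intro bounded_linear_compose[OF bounded_linear_seq] bounded_linear_compose[OF bounded_linear_fst]
        bounded_linear_endo_apply)
  from bounded_linear_exp_sums[OF this, of "t *\<^sub>R Block"] show ?thesis
    unfolding block_flow_def by (simp add: scaleR_power Block_power_apply seq_block_corner divide_inverse_commute)
qed

lemma block_flow_snd: "snd (block_flow t x) = endo_apply (U t) x"
proof -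
  have "bounded_linear (\<lambda>a. snd (endo_apply a (0::l2, x)))"
    by (intro bounded_linear_compose[OF bounded_linear_snd] bounded_linear_endo_apply)
  from bounded_linear_exp_sums[OF this, of "t *\<^sub>R Block"]
  have "(\<lambda>k. endo_apply ((t *\<^sub>R Gen) ^ k /\<^sub>R fact k) x) sums snd (block_flow t x)"
    unfolding block_flow_def by (simp add: scaleR_power Block_power_apply)
  moreover have "(\<lambda>k. endo_apply ((t *\<^sub>R Gen) ^ k /\<^sub>R fact k) x) sums endo_apply (U t) x"
    unfolding U_def by (rule bounded_linear_exp_sums[OF bounded_linear_endo_apply])
  ultimately show ?thesis using sums_unique2 by metis
qed

lemma position_U_eq_block_flow:
  assumes "position (seq x) \<in> ell2"
  shows "of_int n * seq (endo_apply (U t) x) n =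
         seq (endo_apply (U t) (l2_of (position (seq x)))) n + seq (fst (block_flow t x)) n"
proof -
  let ?c = "\<lambda>k. complex_of_real (t ^ k / fact k)"
  have "of_int n * gen_seq_pow k (seq x) n =
        gen_seq_pow k (position (seq x)) n + position_comm k (seq x) n" for k
    using fun_cong[OF position_gen_seq_pow[of k "seq x"], of n] by (simp add: position_def)
  hence "of_int n * (?c k * gen_seq_pow k (seq x) n) =
        ?c k * gen_seq_pow k (position (seq x)) n + ?c k * position_comm k (seq x) n" for k
    by (metis distrib_left mult.left_commute)
  thus ?thesis
    using sums_mult[OF U_sums[of t x n], of "of_int n"]
      sums_add[OF U_sums[of t "l2_of (position (seq x))" n] block_flow_fst_sums[of t x n]] assms
    by (simp add: sums_unique2)
qed

lemma block_flow_fst_has_derivative: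
  "((\<lambda>t. fst (block_flow t x)) has_vector_derivative
     endo_apply Gen (fst (block_flow t x)) + endo_apply Aop (endo_apply (U t) x)) (at t within S)"
proof -
  have "((\<lambda>t. exp (t *\<^sub>R Block)) has_vector_derivative Block * exp (t *\<^sub>R Block)) (at t within S)"
    using exp_scaleR_has_vector_derivative_left has_vector_derivative_at_within by blast
  from bounded_linear.has_vector_derivative[OF bounded_linear_endo_apply this, of "(0, x)"]
  have "((\<lambda>t. block_flow t x) has_vector_derivative block_map (block_flow t x)) (at t within S)"
    unfolding block_flow_def by (simp add: endo_apply_Block)
  from bounded_linear.has_vector_derivative[OF bounded_linear_fst this] show ?thesis
    by (simp add: block_map_def block_flow_snd)
qed

lemma duhamel_formula:
  assumes "T \<ge> 0"
  shows "endo_apply (U (- T)) (fst (block_flow T x)) = integral {0..T} (heis_l2 x)"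
proof -
  have "((\<lambda>t. endo_apply (U (- t)) (fst (block_flow t x))) has_vector_derivative heis_l2 x t) (at t within S)"
    for t S
  proof -
    have "((\<lambda>t. U (- t)) has_vector_derivative U (- t) * (- Gen)) (at t within S)"
      unfolding U_def using exp_scaleR_has_vector_derivative_right[of "- Gen"] by simp
    from bounded_bilinear.has_vector_derivative[OF bounded_bilinear_endo_apply this block_flow_fst_has_derivative]
    show ?thesis by (simp add: heis_l2_def blinfun.add_right blinfun.minus_right)
  qed
  from fundamental_theorem_of_calculus[OF assms this]
  show ?thesis by (simp add: block_flow_def integral_unique)
qed

theorem position_U:
  assumes "position (seq x) \<in> ell2" "T > 0"
  shows "(\<lambda>n. of_int n * seq (endo_apply (U T) x) n) =
         seq (endo_apply (U T) (l2_of (position (seq x)) + T *\<^sub>R tavg_l2 T x))"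
proof -
  have "fst (block_flow T x) = endo_apply (U T) (integral {0..T} (heis_l2 x))"
    using duhamel_formula[of T x] assms U_inverse_right[of T "fst (block_flow T x)"] by simp
  also have "integral {0..T} (heis_l2 x) = T *\<^sub>R tavg_l2 T x" using assms unfolding tavg_l2_def by simp
  finally show ?thesis using position_U_eq_block_flow[OF assms(1)] by (simp add: fun_eq_iff blinfun.add_right)
qed

end

section \<open>Concentration of U(t) v along a velocity\<close>

context schroedinger
begin

lemma seq_U_velocity_defect:
  assumes "position (seq v) \<in> ell2" "t > 0"
  shows "seq (endo_apply (U t) ((1/t) *\<^sub>R l2_of (position (seq v)) + tavg_l2 t v - a *\<^sub>R v)) r =
         complex_of_real (real_of_int r / t - a) * seq (endo_apply (U t) v) r"
proof -
  have "of_int r * seq (endo_apply (U t) v) r =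
        seq (endo_apply (U t) (l2_of (position (seq v)))) r + of_real t * seq (endo_apply (U t) (tavg_l2 t v)) r"
    using fun_cong[OF position_U[OF assms], of r] by (simp add: blinfun.add_right blinfun.scaleR_right)
  thus ?thesis using assms(2) by (simp add: blinfun.add_right blinfun.diff_right blinfun.scaleR_right field_simps)
qed

lemma seq_U_finite_support:
  assumes "\<And>n. N < \<bar>n\<bar> \<Longrightarrow> seq v n = 0"
  shows "seq (endo_apply (U t) v) r = (\<Sum>l\<in>{-N..N}. seq v l * evol \<nu> t (delta l) r)"
proof -
  have "v = (\<Sum>l\<in>{-N..N}. cscale (seq v l) (l2_of (delta l)))"
    by (rule l2_delta_expansion[OF assms])
  hence "endo_apply (U t) v = (\<Sum>l\<in>{-N..N}. cscale (seq v l) (endo_apply (U t) (l2_of (delta l))))"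
    by (metis (no_types, lifting) blinfun.sum_right U_cscale sum.cong)
  thus ?thesis by (simp add: seq_sum evol_eq_U delta_ell2)
qed

lemma U_mass_in_velocity_window:
  assumes "t > 0" "\<epsilon> > 0" "1/2 \<le> norm v"
    and pos: "position (seq v) \<in> ell2"
    and defect: "norm ((1/t) *\<^sub>R l2_of (position (seq v)) + tavg_l2 t v - a *\<^sub>R v) < \<epsilon>/4"
  shows "3/16 \<le> (\<Sum>r\<in>{r::int. (a - \<epsilon>) * t < r \<and> r < (a + \<epsilon>) * t}. (cmod (seq (endo_apply (U t) v) r))\<^sup>2)"
proof -
  define D where "D = (1/t) *\<^sub>R l2_of (position (seq v)) + tavg_l2 t v - a *\<^sub>R v"
  define W where "W = {r::int. (a - \<epsilon>) * t < r \<and> r < (a + \<epsilon>) * t}"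
  have "finite W" unfolding W_def by (rule card_int_between_le)
  have outside: "\<epsilon> * cmod (seq (endo_apply (U t) v) r) \<le> cmod (seq (endo_apply (U t) D) r)" if "r \<notin> W" for r
  proof -
    have "\<epsilon> \<le> \<bar>real_of_int r / t - a\<bar>" using that \<open>t > 0\<close> unfolding W_def by (auto simp: field_simps)
    thus ?thesis unfolding D_def seq_U_velocity_defect[OF pos \<open>t > 0\<close>] norm_mult norm_of_real
      by (simp add: mult_right_mono del: of_real_diff of_real_divide)
  qed
  have "(1/2)\<^sup>2 \<le> (norm v)\<^sup>2" using assms(3) by (intro power_mono) auto
  moreover have "(norm D / \<epsilon>)\<^sup>2 \<le> (1/4)\<^sup>2"
    using defect assms(2) unfolding D_def by (intro power_mono) (auto simp: field_simps)
  moreover have "(norm v)\<^sup>2 - (norm D / \<epsilon>)\<^sup>2 \<le> (\<Sum>r\<in>W. (cmod (seq (endo_apply (U t) v) r))\<^sup>2)"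
    using l2_mass_in_window[OF \<open>finite W\<close> assms(2) outside] by simp
  ultimately show ?thesis unfolding W_def by (simp add: power2_eq_square)
qed

lemma U_finite_support_square_le:
  assumes supp: "\<And>n. N < \<bar>n\<bar> \<Longrightarrow> seq v n = 0" and "norm v \<le> 3/2"
  shows "(cmod (seq (endo_apply (U t) v) r))\<^sup>2 \<le> 9/4 * (\<Sum>l\<in>{-N..N}. (cmod (evol \<nu> t (delta l) r))\<^sup>2)"
proof -
  let ?L = "{-N..N}"
  have "(\<Sum>l\<in>?L. (cmod (seq v l))\<^sup>2) \<le> (norm v)\<^sup>2" by (rule finite_sum_square_le_norm_l2) simp
  also have "\<dots> \<le> (3/2)\<^sup>2" using assms(2) by (intro power_mono) auto
  finally have coeffs: "(\<Sum>l\<in>?L. (cmod (seq v l))\<^sup>2) \<le> 9/4" by (simp add: power2_eq_square)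
  have "cmod (seq (endo_apply (U t) v) r) \<le> (\<Sum>l\<in>?L. cmod (seq v l) * cmod (evol \<nu> t (delta l) r))"
    using norm_sum[of "\<lambda>l. seq v l * evol \<nu> t (delta l) r" ?L]
    by (simp add: norm_mult seq_U_finite_support[OF supp])
  hence "(cmod (seq (endo_apply (U t) v) r))\<^sup>2 \<le> (\<Sum>l\<in>?L. cmod (seq v l) * cmod (evol \<nu> t (delta l) r))\<^sup>2"
    by (rule power_mono) simp
  also have "\<dots> \<le> (\<Sum>l\<in>?L. (cmod (seq v l))\<^sup>2) * (\<Sum>l\<in>?L. (cmod (evol \<nu> t (delta l) r))\<^sup>2)"
    by (rule Cauchy_Schwarz_ineq_sum)
  also have "\<dots> \<le> 9/4 * (\<Sum>l\<in>?L. (cmod (evol \<nu> t (delta l) r))\<^sup>2)"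
    using coeffs by (intro mult_right_mono sum_nonneg) auto
  finally show ?thesis .
qed

text \<open>The state U(t)v puts mass at least 3/16 on sites r with r/t close to a, while it is a
  superposition of at most 2N+1 columns of U(t); some column therefore has a large entry there.\<close>

lemma evol_delta_concentration:
  fixes N :: int and t \<epsilon> a :: real and v :: l2
  assumes "t \<ge> 1" "\<epsilon> > 0" "N \<ge> 0"
    and supp: "\<And>n. N < \<bar>n\<bar> \<Longrightarrow> seq v n = 0"
    and norm_v: "1/2 \<le> norm v" "norm v \<le> 3/2"
    and pos: "position (seq v) \<in> ell2"
    and defect: "norm ((1/t) *\<^sub>R l2_of (position (seq v)) + tavg_l2 t v - a *\<^sub>R v) < \<epsilon>/4"
  shows "\<exists>l r. l \<in> {-N..N} \<and> \<bar>real_of_int r / t - a\<bar> < \<epsilon> \<and>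
           1 / (12 * (2 * real_of_int N + 1) * (2 * \<epsilon> + 1)) / t \<le> (cmod (evol \<nu> t (delta l) r))\<^sup>2"
proof -
  define W where "W = {r::int. (a - \<epsilon>) * t < r \<and> r < (a + \<epsilon>) * t}"
  define L where "L = {-N..N}"
  define f where "f = (\<lambda>(r, l). (cmod (evol \<nu> t (delta l) r))\<^sup>2)"
  have t: "t > 0" using assms(1) by simp
  have "finite W" unfolding W_def by (rule card_int_between_le)
  have "real (card W) \<le> (2 * \<epsilon> + 1) * t"
    using card_int_between_le(2)[of "(a - \<epsilon>) * t" "(a + \<epsilon>) * t"] assms(1,2) unfolding W_def
    by (simp add: algebra_simps)
  hence card: "real (card (W \<times> L)) \<le> (2 * \<epsilon> + 1) * t * (2 * real_of_int N + 1)"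
    using assms(3) by (simp add: L_def card_cartesian_product mult_right_mono)
  have "3/16 \<le> (\<Sum>r\<in>W. (cmod (seq (endo_apply (U t) v) r))\<^sup>2)"
    unfolding W_def by (rule U_mass_in_velocity_window[OF t assms(2) norm_v(1) pos defect])
  also have "\<dots> \<le> (\<Sum>r\<in>W. 9/4 * (\<Sum>l\<in>L. (cmod (evol \<nu> t (delta l) r))\<^sup>2))"
    unfolding L_def by (rule sum_mono, rule U_finite_support_square_le[OF supp norm_v(2)])
  also have "\<dots> = 9/4 * sum f (W \<times> L)"
    by (simp add: f_def sum_distrib_left sum.cartesian_product case_prod_beta)
  finally have "1/12 \<le> sum f (W \<times> L)" by simp
  then obtain p where p: "p \<in> W \<times> L" "(1/12) / real (card (W \<times> L)) \<le> f p"
    using exists_ge_average[of "W \<times> L" "1/12" f] \<open>finite W\<close> by (auto simp: L_def)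
  then obtain r l where rl: "r \<in> W" "l \<in> L" "(1/12) / real (card (W \<times> L)) \<le> f (r, l)"
    by (cases p) auto
  have "card (W \<times> L) > 0" using rl(1,2) \<open>finite W\<close> by (auto simp: L_def card_gt_0_iff)
  hence "(1/12) / ((2 * \<epsilon> + 1) * t * (2 * real_of_int N + 1)) \<le> (1/12) / real (card (W \<times> L))"
    using card by (intro divide_left_mono) auto
  hence "(1/12) / ((2 * \<epsilon> + 1) * t * (2 * real_of_int N + 1)) \<le> f (r, l)"
    using rl(3) by linarith
  moreover have "1 / (12 * (2 * real_of_int N + 1) * (2 * \<epsilon> + 1)) / t =
      (1/12) / ((2 * \<epsilon> + 1) * t * (2 * real_of_int N + 1))"
    by (simp add: mult_ac)
  ultimately have "1 / (12 * (2 * real_of_int N + 1) * (2 * \<epsilon> + 1)) / t \<le> (cmod (evol \<nu> t (delta l) r))\<^sup>2"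
    unfolding f_def by (simp only: case_prod_conv)
  moreover have "\<bar>real_of_int r / t - a\<bar> < \<epsilon>" using rl(1) t unfolding W_def by (auto simp: abs_less_iff field_simps)
  ultimately show ?thesis using rl(2) unfolding L_def by blast
qed

end

section \<open>The asymptotic velocity operator\<close>

locale asymptotic_velocity = schroedinger +
  fixes T :: "nat \<Rightarrow> real" and Q :: "(int \<Rightarrow> complex) \<Rightarrow> (int \<Rightarrow> complex)"
  assumes T_tendsto: "filterlim T at_top sequentially"
    and tavg_tendsto: "\<forall>\<psi>\<in>ell2. Q \<psi> \<in> ell2 \<and> (\<lambda>k. l2norm (\<lambda>n. tavg \<nu> (T k) \<psi> n - Q \<psi> n)) \<longlonglongrightarrow> 0"
begin

definition Qop :: "l2 \<Rightarrow> l2" where "Qop x = l2_of (Q (seq x))"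

lemma seq_Qop: "seq (Qop x) = Q (seq x)"
  unfolding Qop_def using tavg_tendsto by simp

lemma tavg_l2_tendsto_Qop: "(\<lambda>k. tavg_l2 (T k) x) \<longlonglongrightarrow> Qop x"
proof -
  have "seq (tavg_l2 (T k) x - Qop x) = (\<lambda>n. tavg \<nu> (T k) (seq x) n - Q (seq x) n)" for k
    by (simp add: fun_eq_iff tavg_eq_tavg_l2 seq_inverse seq_Qop)
  hence "l2norm (\<lambda>n. tavg \<nu> (T k) (seq x) n - Q (seq x) n) = norm (tavg_l2 (T k) x - Qop x)" for k
    by (simp add: norm_l2_eq_l2norm)
  moreover have "(\<lambda>k. l2norm (\<lambda>n. tavg \<nu> (T k) (seq x) n - Q (seq x) n)) \<longlonglongrightarrow> 0"
    using tavg_tendsto by simp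
  ultimately have "(\<lambda>k. norm (tavg_l2 (T k) x - Qop x)) \<longlonglongrightarrow> 0" by simp
  thus ?thesis by (rule LIM_zero_cancel[OF tendsto_norm_zero_cancel])
qed

lemma eventually_T_ge: "\<forall>\<^sub>F k in sequentially. T k \<ge> c"
  using T_tendsto unfolding filterlim_at_top by blast

lemma linear_Qop: "linear Qop"
proof
  show "Qop (x + y) = Qop x + Qop y" for x y
    using tavg_l2_tendsto_Qop[of "x + y"] tendsto_add[OF tavg_l2_tendsto_Qop tavg_l2_tendsto_Qop, of x y]
    by (simp add: tavg_l2_add LIMSEQ_unique)
  show "Qop (r *\<^sub>R x) = r *\<^sub>R Qop x" for r x
    using tavg_l2_tendsto_Qop[of "r *\<^sub>R x"] tendsto_scaleR[OF tendsto_const tavg_l2_tendsto_Qop, of r x]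
    by (simp add: tavg_l2_scaleR LIMSEQ_unique)
qed

lemma norm_Qop_le: "norm (Qop x) \<le> 2 * norm x"
proof (rule tendsto_upperbound)
  show "(\<lambda>k. norm (tavg_l2 (T k) x)) \<longlonglongrightarrow> norm (Qop x)" by (intro tendsto_norm tavg_l2_tendsto_Qop)
  show "\<forall>\<^sub>F k in sequentially. norm (tavg_l2 (T k) x) \<le> 2 * norm x"
    using eventually_T_ge[of 1] by eventually_elim (simp add: norm_tavg_l2_le)
qed simp

lemma inner_Qop_symmetric: "inner (Qop x) y = inner x (Qop y)"
  using tendsto_inner[OF tavg_l2_tendsto_Qop tendsto_const, of x y]
    tendsto_inner[OF tendsto_const tavg_l2_tendsto_Qop, of x y]
  by (simp add: inner_tavg_l2_symmetric LIMSEQ_unique)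

lemma opnorm_Q_eq_Sup: "opnorm Q = Sup ((\<lambda>x. norm (Qop x)) ` {x. norm x \<le> 1})"
proof -
  have "{l2norm (Q \<psi>) | \<psi>. \<psi> \<in> ell2 \<and> l2norm \<psi> \<le> 1} = (\<lambda>x. norm (Qop x)) ` {x. norm x \<le> 1}"
  proof (intro set_eqI iffI)
    fix r assume "r \<in> {l2norm (Q \<psi>) | \<psi>. \<psi> \<in> ell2 \<and> l2norm \<psi> \<le> 1}"
    then obtain \<psi> where "\<psi> \<in> ell2" "l2norm \<psi> \<le> 1" "r = l2norm (Q \<psi>)" by auto
    thus "r \<in> (\<lambda>x. norm (Qop x)) ` {x. norm x \<le> 1}"
      by (intro image_eqI[of _ _ "l2_of \<psi>"]) (simp_all add: norm_l2_eq_l2norm seq_Qop)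
  next
    fix r assume "r \<in> (\<lambda>x. norm (Qop x)) ` {x. norm x \<le> 1}"
    then obtain x where "norm x \<le> 1" "r = norm (Qop x)" by auto
    thus "r \<in> {l2norm (Q \<psi>) | \<psi>. \<psi> \<in> ell2 \<and> l2norm \<psi> \<le> 1}"
      by (intro CollectI exI[of _ "seq x"]) (simp add: norm_l2_eq_l2norm seq_Qop)
  qed
  thus ?thesis unfolding opnorm_def by simp
qed

lemma bdd_above_norm_Qop: "bdd_above ((\<lambda>x. norm (Qop x)) ` {x. norm x \<le> 1})"
proof (rule bdd_aboveI)
  fix r assume "r \<in> (\<lambda>x. norm (Qop x)) ` {x. norm x \<le> 1}"
  then obtain x where "norm x \<le> 1" "r = norm (Qop x)" by auto
  thus "r \<le> 2" using norm_Qop_le[of x] by linarith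
qed

lemma norm_Qop_le_opnorm: "norm (Qop x) \<le> opnorm Q * norm x"
proof (cases "x = 0")
  case True thus ?thesis using linear_0[OF linear_Qop] by simp
next
  case False
  have "norm (Qop ((1 / norm x) *\<^sub>R x)) \<le> opnorm Q"
    unfolding opnorm_Q_eq_Sup using False by (intro cSup_upper bdd_above_norm_Qop) simp
  thus ?thesis using False by (simp add: linear_scale[OF linear_Qop] field_simps)
qed

lemma zero_in_norm_Qop_image: "0 \<in> (\<lambda>x. norm (Qop x)) ` {x. norm x \<le> 1}"
  using linear_0[OF linear_Qop] by (intro image_eqI[of _ _ 0]) auto

lemma opnorm_Q_nonneg: "opnorm Q \<ge> 0"
  unfolding opnorm_Q_eq_Sup by (rule cSup_upper[OF zero_in_norm_Qop_image bdd_above_norm_Qop])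

lemma opnorm_Q_almost_attained:
  assumes "\<delta> > 0"
  shows "\<exists>x. norm x \<le> 1 \<and> norm (Qop x) > opnorm Q - \<delta>"
proof -
  have "opnorm Q - \<delta> < Sup ((\<lambda>x. norm (Qop x)) ` {x. norm x \<le> 1})"
    using assms by (simp add: opnorm_Q_eq_Sup[symmetric])
  then obtain r where "r \<in> (\<lambda>x. norm (Qop x)) ` {x. norm x \<le> 1}" "opnorm Q - \<delta> < r"
    using less_cSup_iff[OF _ bdd_above_norm_Qop] zero_in_norm_Qop_image by blast
  thus ?thesis by auto
qed

lemma Qop_approx_eigenvector:
  assumes "\<eta> > 0"
  shows "\<exists>u a. norm u = 1 \<and> \<bar>a\<bar> = opnorm Q \<and> norm (Qop u - a *\<^sub>R u) \<le> \<eta>"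
proof (cases "opnorm Q = 0")
  case True
  define u where "u = (1 / norm (l2_of (delta 0))) *\<^sub>R l2_of (delta 0)"
  have "norm u = 1" using l2_of_delta_nonzero[of 0] by (simp add: u_def)
  thus ?thesis using norm_Qop_le_opnorm[of u] True assms by (intro exI[of _ u] exI[of _ 0]) auto
next
  case False
  thus ?thesis using opnorm_Q_nonneg assms
    by (intro symmetric_approx_eigenvector[OF linear_Qop inner_Qop_symmetric norm_Qop_le_opnorm
          opnorm_Q_almost_attained]) auto
qed

lemma finitely_supported_approx_eigenvector:
  assumes "\<epsilon> > 0"
  obtains N v a where "N \<ge> 0" "\<And>n. N < \<bar>n\<bar> \<Longrightarrow> seq v n = 0" "1/2 \<le> norm v" "norm v \<le> 3/2"
    "\<bar>a\<bar> = opnorm Q" "norm (Qop v - a *\<^sub>R v) < \<epsilon>/4"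
proof -
  define m where "m = opnorm Q"
  obtain u a where u: "norm u = 1" "\<bar>a\<bar> = m" "norm (Qop u - a *\<^sub>R u) \<le> \<epsilon>/16"
    using Qop_approx_eigenvector[of "\<epsilon>/16"] assms unfolding m_def by auto
  define \<eta> where "\<eta> = min (1/2) (\<epsilon> / (16 * (m + 1)))"
  have m: "m \<ge> 0" unfolding m_def by (rule opnorm_Q_nonneg)
  have \<eta>: "\<eta> > 0" "\<eta> \<le> 1/2" "m * \<eta> \<le> \<epsilon>/16"
    using assms m by (auto simp: \<eta>_def min_def field_simps)
  obtain N0 where N0: "norm (u - truncate N0 u) \<le> \<eta>" using truncate_approx[OF \<eta>(1)] by blast
  define v where "v = truncate N0 u"
  have uv: "norm (u - v) \<le> \<eta>" using N0 unfolding v_def .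
  have "norm (Qop v - a *\<^sub>R v) \<le> norm (Qop u - a *\<^sub>R u) + (norm (Qop (u - v)) + norm (a *\<^sub>R (u - v)))"
    using norm_triangle_ineq4[of "Qop u - a *\<^sub>R u" "Qop (u - v) - a *\<^sub>R (u - v)"]
      norm_triangle_ineq4[of "Qop (u - v)" "a *\<^sub>R (u - v)"]
    by (simp add: linear_diff[OF linear_Qop] algebra_simps)
  moreover have "norm (Qop (u - v)) \<le> m * \<eta>"
    using norm_Qop_le_opnorm[of "u - v"] mult_left_mono[OF uv m] unfolding m_def by linarith
  moreover have "norm (a *\<^sub>R (u - v)) \<le> m * \<eta>"
    using mult_left_mono[OF uv m] u(2) by simp
  ultimately have "norm (Qop v - a *\<^sub>R v) < \<epsilon>/4" using u(3) \<eta>(3) assms by linarith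
  moreover have "\<bar>norm u - norm v\<bar> \<le> \<eta>" using norm_triangle_ineq3[of u v] uv by linarith
  hence "1/2 \<le> norm v" "norm v \<le> 3/2" using \<eta>(2) u(1) by (auto simp: abs_le_iff)
  moreover have "seq v n = 0" if "max N0 0 < \<bar>n\<bar>" for n
    using that unfolding v_def seq_truncate by auto
  ultimately show ?thesis using that[of "max N0 0" v a] u(2) unfolding m_def by auto
qed

lemma eventually_velocity_defect_small:
  assumes "position (seq v) \<in> ell2" "norm (Qop v - a *\<^sub>R v) < \<delta>"
  shows "\<forall>\<^sub>F k in sequentially.
           norm ((1 / T k) *\<^sub>R l2_of (position (seq v)) + tavg_l2 (T k) v - a *\<^sub>R v) < \<delta>"
proof -
  have "(\<lambda>k. 1 / T k) \<longlonglongrightarrow> 0"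
    by (rule tendsto_divide_0[OF tendsto_const filterlim_at_top_imp_at_infinity[OF T_tendsto]])
  hence "(\<lambda>k. (1 / T k) *\<^sub>R l2_of (position (seq v)) + tavg_l2 (T k) v - a *\<^sub>R v) \<longlonglongrightarrow>
         0 *\<^sub>R l2_of (position (seq v)) + Qop v - a *\<^sub>R v"
    by (intro tendsto_intros tavg_l2_tendsto_Qop)
  from order_tendstoD(2)[OF tendsto_norm[OF this]] assms(2) show ?thesis by simp
qed

theorem evol_delta_lower_bound:
  assumes "\<epsilon> > 0"
  shows "\<exists>K::nat. \<exists>L::real. \<exists>C::real. L \<ge> 0 \<and> C > 0 \<and>
           (\<forall>k\<ge>K. \<exists>l r :: int. \<bar>real_of_int l\<bar> \<le> L \<and>
              (opnorm Q - \<epsilon>) * T k \<le> \<bar>real_of_int r\<bar> \<and> \<bar>real_of_int r\<bar> \<le> (opnorm Q + \<epsilon>) * T k \<and>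
              (cmod (l2inner (delta r) (evol \<nu> (T k) (delta l))))\<^sup>2 \<ge> C / T k)"
proof -
  obtain N v a where v: "N \<ge> 0" "\<And>n. N < \<bar>n\<bar> \<Longrightarrow> seq v n = 0" "1/2 \<le> norm v" "norm v \<le> 3/2"
    and a: "\<bar>a\<bar> = opnorm Q" "norm (Qop v - a *\<^sub>R v) < \<epsilon>/4"
    using finitely_supported_approx_eigenvector[OF assms] by blast
  have pos: "position (seq v) \<in> ell2" by (rule position_ell2_finite_support[OF v(2)])
  obtain K where K: "\<And>k. k \<ge> K \<Longrightarrow> T k \<ge> 1 \<and>
      norm ((1 / T k) *\<^sub>R l2_of (position (seq v)) + tavg_l2 (T k) v - a *\<^sub>R v) < \<epsilon>/4"
    using eventually_conj[OF eventually_T_ge[of 1] eventually_velocity_defect_small[OF pos a(2)]]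
    unfolding eventually_sequentially by blast
  define C where "C = 1 / (12 * (2 * real_of_int N + 1) * (2 * \<epsilon> + 1))"
  have "\<exists>l r :: int. \<bar>real_of_int l\<bar> \<le> real_of_int N \<and>
          (opnorm Q - \<epsilon>) * T k \<le> \<bar>real_of_int r\<bar> \<and> \<bar>real_of_int r\<bar> \<le> (opnorm Q + \<epsilon>) * T k \<and>
          (cmod (l2inner (delta r) (evol \<nu> (T k) (delta l))))\<^sup>2 \<ge> C / T k" if "k \<ge> K" for k
  proof -
    have Tk: "T k \<ge> 1" and defect:
      "norm ((1 / T k) *\<^sub>R l2_of (position (seq v)) + tavg_l2 (T k) v - a *\<^sub>R v) < \<epsilon>/4"
      using K[OF that] by auto
    obtain l r where lr: "l \<in> {-N..N}" "\<bar>real_of_int r / T k - a\<bar> < \<epsilon>"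
        "C / T k \<le> (cmod (evol \<nu> (T k) (delta l) r))\<^sup>2"
      using evol_delta_concentration[OF Tk assms v pos defect] unfolding C_def by blast
    have "\<bar>\<bar>real_of_int r\<bar> / T k - opnorm Q\<bar> < \<epsilon>"
      using abs_triangle_ineq3[of "real_of_int r / T k" a] lr(2) a(1) Tk by simp
    hence "(opnorm Q - \<epsilon>) * T k \<le> \<bar>real_of_int r\<bar>" "\<bar>real_of_int r\<bar> \<le> (opnorm Q + \<epsilon>) * T k"
      using Tk by (auto simp: abs_less_iff field_simps)
    moreover have "\<bar>real_of_int l\<bar> \<le> real_of_int N" using lr(1) by (simp add: abs_le_iff)
    ultimately show ?thesis using lr(3) unfolding l2inner_delta_left by blast
  qed
  moreover have "C > 0" using v(1) assms by (simp add: C_def)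
  ultimately show ?thesis using v(1) by (intro exI[of _ K] exI[of _ "real_of_int N"] exI[of _ C]) simp
qed

end

theorem proposition6p2:
  fixes \<nu> :: "int \<Rightarrow> real" and T :: "nat \<Rightarrow> real"
    and Q :: "(int \<Rightarrow> complex) \<Rightarrow> (int \<Rightarrow> complex)"
  assumes "bounded (range \<nu>)"
    and "filterlim T at_top sequentially"
    and "\<forall>\<psi>\<in>ell2. Q \<psi> \<in> ell2 \<and> (\<lambda>k. l2norm (\<lambda>n. tavg \<nu> (T k) \<psi> n - Q \<psi> n)) \<longlonglongrightarrow> 0"
  shows "\<forall>\<epsilon>>0. \<exists>K::nat. \<exists>L::real. \<exists>C::real. L \<ge> 0 \<and> C > 0 \<and>
           (\<forall>k\<ge>K. \<exists>l r :: int. \<bar>real_of_int l\<bar> \<le> L \<and>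
              (opnorm Q - \<epsilon>) * T k \<le> \<bar>real_of_int r\<bar> \<and> \<bar>real_of_int r\<bar> \<le> (opnorm Q + \<epsilon>) * T k \<and>
              (cmod (l2inner (delta r) (evol \<nu> (T k) (delta l))))\<^sup>2 \<ge> C / T k)"
proof -
  interpret asymptotic_velocity \<nu> T Q
    by unfold_locales (use assms in auto)
  show ?thesis using evol_delta_lower_bound by blast
qed

end
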